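(* Let $(M,g)$ be a Riemannian manifold, $\lambda\in\mathbb{R}$, $X$ a smooth vector field and $\Gamma:M\to(0,\infty)$ any smooth positive function, and define the vector field $K$ by $K_a=\Gamma X_a+\nabla_a\Gamma$. Suppose $R_{ab}=\tfrac12X_aX_b-\nabla_{(a}X_{b)}+\lambda g_{ab}$ holds (equivalently $R_{ab}=\frac{K_aK_b}{2\Gamma^2}-\frac{\nabla_a\Gamma\nabla_b\Gamma}{2\Gamma^2}-\frac1\Gamma\nabla_{(a}K_{b)}+\frac1\Gamma\nabla_a\nabla_b\Gamma+\lambda g_{ab}$). Then $$\nabla_{(a}K_{b)}\nabla^aK^b=\nabla^a\Big(K^b\nabla_{(a}K_{b)}-\tfrac12K_a\Delta\Gamma-\tfrac12K_a\nabla_bK^b-\lambda\Gamma K_a\Big)+\nabla_bK^b\Big(-\frac{|K|^2}{2\Gamma}+\tfrac12\Delta\Gamma+\tfrac12\nabla_cK^c+\frac{1}{2\Gamma}K^c\nabla_c\Gamma+\lambda\Gamma\Big).$$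
   Context: $\nabla$ is the Levi-Civita connection of $g$, $R_{ab}$ its Ricci tensor, $\Delta=\nabla^a\nabla_a$, $|\cdot|$ the $g$-norm; indices are raised and lowered with $g$, and $(ab)$ denotes symmetrisation with weight $1/2$. *)

theory Defs
  imports "HOL-Analysis.Analysis"
begin

text \<open>Local coordinate rendering of Riemannian geometry. Covector fields are
  functions real^'n \<Rightarrow> 'n \<Rightarrow> real (components with lowered index).\<close>

definition pd :: "'n::finite \<Rightarrow> (real^'n \<Rightarrow> real) \<Rightarrow> real^'n \<Rightarrow> real" where
  "pd i f x = frechet_derivative f (at x) (axis i 1)"

fun iter_pd :: "('n::finite) list \<Rightarrow> (real^'n \<Rightarrow> real) \<Rightarrow> real^'n \<Rightarrow> real" where
  "iter_pd [] f = f"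
| "iter_pd (i # is) f = pd i (iter_pd is f)"

definition smooth_on :: "(real^'n::finite) set \<Rightarrow> (real^'n \<Rightarrow> real) \<Rightarrow> bool" where
  "smooth_on U f \<longleftrightarrow> (\<forall>is. iter_pd is f differentiable_on U)"

definition riemannian_metric ::
  "(real^'n::finite) set \<Rightarrow> (real^'n \<Rightarrow> 'n \<Rightarrow> 'n \<Rightarrow> real) \<Rightarrow> bool" where
  "riemannian_metric U g \<longleftrightarrow> open U \<and>
     (\<forall>i j. smooth_on U (\<lambda>x. g x i j)) \<and>
     (\<forall>x\<in>U. \<forall>i j. g x i j = g x j i) \<and>
     (\<forall>x\<in>U. \<forall>v::'n \<Rightarrow> real. v \<noteq> (\<lambda>_. 0) \<longrightarrow> (\<Sum>i\<in>UNIV. \<Sum>j\<in>UNIV. g x i j * v i * v j) > 0)"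

definition ginv :: "(real^'n::finite \<Rightarrow> 'n \<Rightarrow> 'n \<Rightarrow> real) \<Rightarrow> real^'n \<Rightarrow> 'n \<Rightarrow> 'n \<Rightarrow> real" where
  "ginv g x i j = matrix_inv (\<chi> a b. g x a b) $ i $ j"

definition christoffel ::
  "(real^'n::finite \<Rightarrow> 'n \<Rightarrow> 'n \<Rightarrow> real) \<Rightarrow> real^'n \<Rightarrow> 'n \<Rightarrow> 'n \<Rightarrow> 'n \<Rightarrow> real" where
  "christoffel g x k i j = (1/2) * (\<Sum>l\<in>UNIV. ginv g x k l *
     (pd i (\<lambda>y. g y j l) x + pd j (\<lambda>y. g y i l) x - pd l (\<lambda>y. g y i j) x))"

definition ricci ::
  "(real^'n::finite \<Rightarrow> 'n \<Rightarrow> 'n \<Rightarrow> real) \<Rightarrow> real^'n \<Rightarrow> 'n \<Rightarrow> 'n \<Rightarrow> real" where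
  "ricci g x i j = (\<Sum>k\<in>UNIV. pd k (\<lambda>y. christoffel g y k i j) x - pd j (\<lambda>y. christoffel g y k k i) x
     + (\<Sum>l\<in>UNIV. christoffel g x k k l * christoffel g x l i j - christoffel g x k j l * christoffel g x l k i))"

definition cov_d ::
  "(real^'n::finite \<Rightarrow> 'n \<Rightarrow> 'n \<Rightarrow> real) \<Rightarrow> (real^'n \<Rightarrow> 'n \<Rightarrow> real) \<Rightarrow> real^'n \<Rightarrow> 'n \<Rightarrow> 'n \<Rightarrow> real" where
  "cov_d g V x i j = pd i (\<lambda>y. V y j) x - (\<Sum>k\<in>UNIV. christoffel g x k i j * V x k)"

definition sym_cov_d ::
  "(real^'n::finite \<Rightarrow> 'n \<Rightarrow> 'n \<Rightarrow> real) \<Rightarrow> (real^'n \<Rightarrow> 'n \<Rightarrow> real) \<Rightarrow> real^'n \<Rightarrow> 'n \<Rightarrow> 'n \<Rightarrow> real" where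
  "sym_cov_d g V x i j = (cov_d g V x i j + cov_d g V x j i) / 2"

definition divg ::
  "(real^'n::finite \<Rightarrow> 'n \<Rightarrow> 'n \<Rightarrow> real) \<Rightarrow> (real^'n \<Rightarrow> 'n \<Rightarrow> real) \<Rightarrow> real^'n \<Rightarrow> real" where
  "divg g V x = (\<Sum>i\<in>UNIV. \<Sum>j\<in>UNIV. ginv g x i j * cov_d g V x i j)"

definition grad :: "(real^'n::finite \<Rightarrow> real) \<Rightarrow> real^'n \<Rightarrow> 'n \<Rightarrow> real" where
  "grad f x i = pd i f x"

definition laplacian ::
  "(real^'n::finite \<Rightarrow> 'n \<Rightarrow> 'n \<Rightarrow> real) \<Rightarrow> (real^'n \<Rightarrow> real) \<Rightarrow> real^'n \<Rightarrow> real" where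
  "laplacian g f x = divg g (grad f) x"

definition raise ::
  "(real^'n::finite \<Rightarrow> 'n \<Rightarrow> 'n \<Rightarrow> real) \<Rightarrow> (real^'n \<Rightarrow> 'n \<Rightarrow> real) \<Rightarrow> real^'n \<Rightarrow> 'n \<Rightarrow> real" where
  "raise g V x a = (\<Sum>b\<in>UNIV. ginv g x a b * V x b)"

end

theory Submission
  imports Defs
begin

text \<open>
  Write \<open>f = \<Delta>\<Gamma>/2 + (\<nabla>\<cdot>K)/2 + \<lambda>\<Gamma>\<close> and \<open>S = \<nabla>\<^sub>(\<^sub>aK\<^sub>b\<^sub>)\<close>. By the Leibniz rule the divergence of
  \<open>K\<^sup>bS\<^sub>a\<^sub>b - f K\<^sub>a\<close> is the left-hand side plus \<open>K\<^sup>b \<nabla>\<^sup>aS\<^sub>a\<^sub>b - K\<^sup>a\<nabla>\<^sub>af - f \<nabla>\<cdot>K\<close>, so the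
  theorem amounts to a formula for \<open>\<nabla>\<^sup>aS\<^sub>a\<^sub>b\<close>. The Ricci identity gives
  \<open>2\<nabla>\<^sup>aS\<^sub>a\<^sub>b = \<Delta>K\<^sub>b + \<nabla>\<^sub>b(\<nabla>\<cdot>K) + R\<^sub>b\<^sub>cK\<^sup>c\<close>. Substituting \<open>K = \<Gamma>X + \<nabla>\<Gamma>\<close>, the rough
  Laplacian of \<open>X\<close> is eliminated with the contracted Bianchi identity \<open>2\<nabla>\<^sup>aR\<^sub>a\<^sub>b = \<nabla>\<^sub>bR\<close>
  applied to \<open>R\<^sub>a\<^sub>b = X\<^sub>aX\<^sub>b/2 - \<nabla>\<^sub>(\<^sub>aX\<^sub>b\<^sub>) + \<lambda>g\<^sub>a\<^sub>b\<close>, and everything collapses to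
  \<open>2\<nabla>\<^sup>aS\<^sub>a\<^sub>b = 2\<nabla>\<^sub>bf + X\<^sub>b \<nabla>\<cdot>K + K\<^sup>a(\<nabla>\<^sub>aX\<^sub>b - \<nabla>\<^sub>bX\<^sub>a)\<close>.
  The last term vanishes against \<open>K\<^sup>b\<close>, and \<open>|K|\<^sup>2 - K\<^sup>a\<nabla>\<^sub>a\<Gamma> = \<Gamma> K\<^sup>aX\<^sub>a\<close>.
\<close>

lemma sum_mult_sum_swap:
  "(\<Sum>k\<in>A. a k * (\<Sum>l\<in>B. b k l * F l)) = (\<Sum>l\<in>B. (\<Sum>k\<in>A. a k * b k l) * (F l :: real))"
  by (simp add: sum_distrib_left sum_distrib_right mult.assoc sum.swap[of _ A])

lemma sum_delta_mult: "(\<Sum>l\<in>UNIV. (if (m::'a::finite) = l then 1 else 0) * F l) = (F m :: real)"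
proof -
  have "(\<Sum>l\<in>UNIV. (if m = l then 1 else 0) * F l) = (\<Sum>l\<in>UNIV. if m = l then F l else 0)"
    by (rule sum.cong) auto
  then show ?thesis using sum.delta'[of UNIV m F] by simp
qed

lemma sum_reverse3:
  "(\<Sum>a\<in>A. \<Sum>b\<in>B. \<Sum>c\<in>C. f a b c) = (\<Sum>c\<in>C. \<Sum>b\<in>B. \<Sum>a\<in>A. f a b c :: 'r::comm_monoid_add)"
proof -
  have "(\<Sum>a\<in>A. \<Sum>b\<in>B. \<Sum>c\<in>C. f a b c) = (\<Sum>a\<in>A. \<Sum>c\<in>C. \<Sum>b\<in>B. f a b c)"
    by (rule sum.cong[OF refl sum.swap])
  also have "\<dots> = (\<Sum>c\<in>C. \<Sum>a\<in>A. \<Sum>b\<in>B. f a b c)" by (rule sum.swap)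
  also have "\<dots> = (\<Sum>c\<in>C. \<Sum>b\<in>B. \<Sum>a\<in>A. f a b c)" by (rule sum.cong[OF refl sum.swap])
  finally show ?thesis .
qed

lemma sum_rotate3:
  "(\<Sum>a\<in>A. \<Sum>b\<in>B. \<Sum>c\<in>C. f a b c) = (\<Sum>c\<in>C. \<Sum>a\<in>A. \<Sum>b\<in>B. f a b c :: 'r::comm_monoid_add)"
  by (subst sum.cong[OF refl sum.swap]) (rule sum.swap)

lemma sum_sum_mult_sum_commute:
  "(\<Sum>b\<in>B. \<Sum>e\<in>E. G b e * (\<Sum>f\<in>F. c f * R f b e))
    = (\<Sum>f\<in>F. c f * (\<Sum>b\<in>B. \<Sum>e\<in>E. G b e * R f b e) :: real)"
proof -
  have "(\<Sum>b\<in>B. \<Sum>e\<in>E. G b e * (\<Sum>f\<in>F. c f * R f b e))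
      = (\<Sum>f\<in>F. \<Sum>b\<in>B. \<Sum>e\<in>E. G b e * (c f * R f b e))"
    by (simp only: sum_distrib_left) (rule sum_rotate3)
  also have "\<dots> = (\<Sum>f\<in>F. c f * (\<Sum>b\<in>B. \<Sum>e\<in>E. G b e * R f b e))"
    by (simp only: sum_distrib_left) (intro sum.cong refl, simp add: mult_ac)
  finally show ?thesis .
qed

lemma sum_quadratic_form_transpose:
  "(\<Sum>b\<in>A. v b * (\<Sum>f\<in>A. v f * T f b)) = (\<Sum>b\<in>A. v b * (\<Sum>f\<in>A. v f * T b f) :: real)"
  unfolding sum_distrib_left by (subst sum.swap) (simp add: mult_ac)

section \<open>Partial derivatives and smooth functions\<close>

lemma pd_eq_derivative: "(f has_derivative D) (at x) \<Longrightarrow> pd i f x = D (axis i 1)"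
  unfolding pd_def using frechet_derivative_at by metis

lemma pd_cong_open:
  assumes "open U" "x \<in> U" "\<And>y. y \<in> U \<Longrightarrow> f y = h y"
  shows "pd i f x = pd i h x"
proof -
  have "(f has_derivative D) (at x) \<longleftrightarrow> (h has_derivative D) (at x)" for D
    using has_derivative_transform_within_open[where s=U and f=f and g=h]
      has_derivative_transform_within_open[where s=U and f=h and g=f] assms by metis
  then show ?thesis unfolding pd_def frechet_derivative_def by simp
qed

lemma iter_pd_cong_open:
  assumes "open U" "\<And>y. y \<in> U \<Longrightarrow> f y = h y"
  shows "y \<in> U \<Longrightarrow> iter_pd is f y = iter_pd is h y"
proof (induction "is" arbitrary: y)
  case (Cons i "is")
  then show ?case using pd_cong_open[OF assms(1) Cons.prems, of "iter_pd is f" "iter_pd is h"] by simp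
qed (use assms in simp)

lemma differentiable_on_cong_open:
  assumes "open U" "\<And>y. y \<in> U \<Longrightarrow> f y = h y" "f differentiable_on U"
  shows "h differentiable_on U"
  unfolding differentiable_on_eq_differentiable_at[OF assms(1)]
proof
  fix y assume "y \<in> U"
  then obtain D where "(f has_derivative D) (at y)"
    using assms(1,3) differentiable_on_eq_differentiable_at differentiable_def by blast
  then have "(h has_derivative D) (at y)"
    using has_derivative_transform_within_open assms(1,2) \<open>y \<in> U\<close> by blast
  then show "h differentiable at y" using differentiable_def by blast
qed

lemma iter_pd_append: "iter_pd (is @ [i]) f = iter_pd is (pd i f)"
  by (induction "is") auto

lemma pd_add:
  assumes "f differentiable (at x)" "h differentiable (at x)"
  shows "pd i (\<lambda>y. f y + h y) x = pd i f x + pd i h x"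
  using pd_eq_derivative[OF has_derivative_add[OF assms[THEN frechet_derivative_works[THEN iffD1]]]]
  unfolding pd_def by simp

lemma pd_diff:
  assumes "f differentiable (at x)" "h differentiable (at x)"
  shows "pd i (\<lambda>y. f y - h y) x = pd i f x - pd i h x"
  using pd_eq_derivative[OF has_derivative_diff[OF assms[THEN frechet_derivative_works[THEN iffD1]]]]
  unfolding pd_def by simp

lemma pd_minus:
  assumes "f differentiable (at x)"
  shows "pd i (\<lambda>y. - f y) x = - pd i f x"
  using pd_eq_derivative[OF has_derivative_minus[OF assms[THEN frechet_derivative_works[THEN iffD1]]]]
  unfolding pd_def by simp

lemma pd_mult:
  assumes "f differentiable (at x)" "h differentiable (at x)"
  shows "pd i (\<lambda>y. f y * h y) x = pd i f x * h x + f x * pd i h x"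
  using pd_eq_derivative[OF has_derivative_mult[OF assms[THEN frechet_derivative_works[THEN iffD1]]]]
  unfolding pd_def by simp

lemma pd_const: "pd i (\<lambda>y. c) x = 0"
  unfolding pd_def by simp

lemma pd_sum:
  assumes "\<And>a. a \<in> A \<Longrightarrow> f a differentiable (at x)"
  shows "pd i (\<lambda>y. \<Sum>a\<in>A. f a y) x = (\<Sum>a\<in>A. pd i (f a) x)"
proof -
  have "((\<lambda>y. \<Sum>a\<in>A. f a y) has_derivative (\<lambda>v. \<Sum>a\<in>A. frechet_derivative (f a) (at x) v)) (at x)"
    using assms by (intro has_derivative_sum) (simp add: frechet_derivative_works[symmetric])
  from pd_eq_derivative[OF this] show ?thesis unfolding pd_def by simp
qed

lemma pd_inverse:
  assumes "f differentiable (at x)" "f x \<noteq> 0"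
  shows "pd i (\<lambda>y. 1 / f y) x = - pd i f x * (1 / f x) * (1 / f x)"
  using pd_eq_derivative[OF Deriv.has_derivative_inverse[OF assms(2)
        assms(1)[THEN frechet_derivative_works[THEN iffD1]]]]
  unfolding pd_def by (simp add: divide_inverse)

definition smooth_upto_on :: "(real^'n::finite) set \<Rightarrow> nat \<Rightarrow> (real^'n \<Rightarrow> real) \<Rightarrow> bool" where
  "smooth_upto_on U n f \<longleftrightarrow> (\<forall>is. length is \<le> n \<longrightarrow> iter_pd is f differentiable_on U)"

lemma smooth_on_iff_upto: "smooth_on U f \<longleftrightarrow> (\<forall>n. smooth_upto_on U n f)"
  unfolding smooth_on_def smooth_upto_on_def by auto

lemma smooth_upto_on_0: "smooth_upto_on U 0 f \<longleftrightarrow> f differentiable_on U"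
  unfolding smooth_upto_on_def by auto

lemma smooth_upto_on_Suc:
  "smooth_upto_on U (Suc n) f \<longleftrightarrow> f differentiable_on U \<and> (\<forall>i. smooth_upto_on U n (pd i f))"
proof
  assume f: "smooth_upto_on U (Suc n) f"
  then have "iter_pd (is @ [i]) f differentiable_on U" if "length is \<le> n" for "is" i
    using that unfolding smooth_upto_on_def by simp
  then show "f differentiable_on U \<and> (\<forall>i. smooth_upto_on U n (pd i f))"
    using f[unfolded smooth_upto_on_def, rule_format, of "[]"]
    by (simp add: smooth_upto_on_def iter_pd_append)
next
  assume f: "f differentiable_on U \<and> (\<forall>i. smooth_upto_on U n (pd i f))"
  show "smooth_upto_on U (Suc n) f"
    unfolding smooth_upto_on_def
  proof (intro allI impI)
    fix "is" :: "'a list"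
    assume "length is \<le> Suc n"
    then show "iter_pd is f differentiable_on U"
      using f by (cases "is" rule: rev_cases) (auto simp: smooth_upto_on_def iter_pd_append)
  qed
qed

lemma smooth_upto_on_mono: "smooth_upto_on U n f \<Longrightarrow> m \<le> n \<Longrightarrow> smooth_upto_on U m f"
  unfolding smooth_upto_on_def by auto

lemma smooth_upto_on_differentiable_at:
  "smooth_upto_on U n f \<Longrightarrow> open U \<Longrightarrow> x \<in> U \<Longrightarrow> f differentiable (at x)"
  using smooth_upto_on_mono[of U n f 0] differentiable_on_eq_differentiable_at
  by (auto simp: smooth_upto_on_0)

context
  fixes U :: "(real^'n::finite) set"
  assumes open_U: "open U"
begin

lemma smooth_upto_on_cong:
  assumes "\<And>y. y \<in> U \<Longrightarrow> f y = h y" "smooth_upto_on U n f"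
  shows "smooth_upto_on U n h"
  unfolding smooth_upto_on_def
proof (intro allI impI)
  fix "is" :: "'n list"
  assume "length is \<le> n"
  then have f: "iter_pd is f differentiable_on U"
    using assms(2) unfolding smooth_upto_on_def by blast
  show "iter_pd is h differentiable_on U"
    by (rule differentiable_on_cong_open[OF open_U _ f]) (rule iter_pd_cong_open[OF open_U assms(1)])
qed

lemma smooth_upto_on_const: "smooth_upto_on U n (\<lambda>y. c)"
proof (induction n arbitrary: c)
  case (Suc n)
  have "pd i (\<lambda>y::real^'n. c) = (\<lambda>y. 0)" for i by (simp add: fun_eq_iff pd_const)
  then show ?case using Suc by (simp add: smooth_upto_on_Suc)
qed (simp add: smooth_upto_on_0)

lemma smooth_upto_on_add:
  "smooth_upto_on U n f \<Longrightarrow> smooth_upto_on U n h \<Longrightarrow> smooth_upto_on U n (\<lambda>y. f y + h y)"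
proof (induction n arbitrary: f h)
  case (Suc n)
  have D: "pd i (\<lambda>y. f y + h y) y = pd i f y + pd i h y" if "y \<in> U" for i y
    using Suc.prems that by (intro pd_add smooth_upto_on_differentiable_at[OF _ open_U])
  have S: "smooth_upto_on U n (\<lambda>y. pd i f y + pd i h y)" for i
    using Suc by (simp add: smooth_upto_on_Suc)
  show ?case
    using Suc.prems smooth_upto_on_cong[OF D[symmetric] S] by (simp add: smooth_upto_on_Suc)
qed (simp add: smooth_upto_on_0)

lemma smooth_upto_on_minus: "smooth_upto_on U n f \<Longrightarrow> smooth_upto_on U n (\<lambda>y. - f y)"
proof (induction n arbitrary: f)
  case (Suc n)
  have D: "pd i (\<lambda>y. - f y) y = - pd i f y" if "y \<in> U" for i y
    using Suc.prems that by (intro pd_minus smooth_upto_on_differentiable_at[OF _ open_U])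
  have S: "smooth_upto_on U n (\<lambda>y. - pd i f y)" for i
    using Suc by (simp add: smooth_upto_on_Suc)
  show ?case
    using Suc.prems smooth_upto_on_cong[OF D[symmetric] S]
    by (simp add: smooth_upto_on_Suc differentiable_on_minus)
qed (simp add: smooth_upto_on_0 differentiable_on_minus)

lemma smooth_upto_on_mult:
  "smooth_upto_on U n f \<Longrightarrow> smooth_upto_on U n h \<Longrightarrow> smooth_upto_on U n (\<lambda>y. f y * h y)"
proof (induction n arbitrary: f h)
  case (Suc n)
  have D: "pd i (\<lambda>y. f y * h y) y = pd i f y * h y + f y * pd i h y" if "y \<in> U" for i y
    using Suc.prems that by (intro pd_mult smooth_upto_on_differentiable_at[OF _ open_U])
  have "smooth_upto_on U n f" "smooth_upto_on U n h"
    using Suc.prems smooth_upto_on_mono[of U "Suc n" _ n] by auto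
  moreover have "smooth_upto_on U n (pd i f)" "smooth_upto_on U n (pd i h)" for i
    using Suc.prems by (simp_all add: smooth_upto_on_Suc)
  ultimately have S: "smooth_upto_on U n (\<lambda>y. pd i f y * h y + f y * pd i h y)" for i
    by (simp add: Suc.IH smooth_upto_on_add)
  show ?case
    using Suc.prems smooth_upto_on_cong[OF D[symmetric] S] by (simp add: smooth_upto_on_Suc)
qed (simp add: smooth_upto_on_0)

lemma smooth_upto_on_inverse:
  "smooth_upto_on U n f \<Longrightarrow> (\<And>y. y \<in> U \<Longrightarrow> f y \<noteq> 0) \<Longrightarrow> smooth_upto_on U n (\<lambda>y. 1 / f y)"
proof (induction n)
  case (Suc n)
  have inv: "smooth_upto_on U n (\<lambda>y. 1 / f y)"
    by (rule Suc.IH[OF smooth_upto_on_mono[OF Suc.prems(1)] Suc.prems(2)]) auto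
  have D: "pd i (\<lambda>y. 1 / f y) y = - pd i f y * (1 / f y) * (1 / f y)" if "y \<in> U" for i y
    using pd_inverse[OF smooth_upto_on_differentiable_at[OF Suc.prems(1) open_U that] Suc.prems(2)[OF that]] .
  have "smooth_upto_on U n (pd i f)" for i
    using Suc.prems(1) by (simp add: smooth_upto_on_Suc)
  then have S: "smooth_upto_on U n (\<lambda>y. - pd i f y * (1 / f y) * (1 / f y))" for i
    using smooth_upto_on_mult[OF smooth_upto_on_mult[OF smooth_upto_on_minus inv] inv] by blast
  moreover have "(\<lambda>y. 1 / f y) differentiable_on U"
    using inv smooth_upto_on_mono[of U n _ 0] by (simp add: smooth_upto_on_0)
  ultimately show ?case
    using smooth_upto_on_cong[OF D[symmetric] S] by (simp add: smooth_upto_on_Suc)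
qed (simp add: smooth_upto_on_0 differentiable_on_def differentiable_divide)

lemma smooth_on_const: "smooth_on U (\<lambda>y. c)"
  by (simp add: smooth_on_iff_upto smooth_upto_on_const)

lemma smooth_on_add: "smooth_on U f \<Longrightarrow> smooth_on U h \<Longrightarrow> smooth_on U (\<lambda>y. f y + h y)"
  by (simp add: smooth_on_iff_upto smooth_upto_on_add)

lemma smooth_on_minus: "smooth_on U f \<Longrightarrow> smooth_on U (\<lambda>y. - f y)"
  by (simp add: smooth_on_iff_upto smooth_upto_on_minus)

lemma smooth_on_diff: "smooth_on U f \<Longrightarrow> smooth_on U h \<Longrightarrow> smooth_on U (\<lambda>y. f y - h y)"
  using smooth_on_add[of f "\<lambda>y. - h y"] smooth_on_minus[of h] by simp

lemma smooth_on_mult: "smooth_on U f \<Longrightarrow> smooth_on U h \<Longrightarrow> smooth_on U (\<lambda>y. f y * h y)"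
  by (simp add: smooth_on_iff_upto smooth_upto_on_mult)

lemma smooth_on_inverse:
  "smooth_on U f \<Longrightarrow> (\<And>y. y \<in> U \<Longrightarrow> f y \<noteq> 0) \<Longrightarrow> smooth_on U (\<lambda>y. 1 / f y)"
  by (simp add: smooth_on_iff_upto smooth_upto_on_inverse)

lemma smooth_on_divide_const: "smooth_on U f \<Longrightarrow> smooth_on U (\<lambda>y. f y / c)"
  using smooth_on_mult[OF _ smooth_on_const, of f "1 / c"] by simp

lemma smooth_on_sum:
  "finite A \<Longrightarrow> (\<And>a. a \<in> A \<Longrightarrow> smooth_on U (f a)) \<Longrightarrow> smooth_on U (\<lambda>y. \<Sum>a\<in>A. f a y)"
  by (induction A rule: finite_induct) (simp_all add: smooth_on_add smooth_on_const)

lemma smooth_on_prod: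
  "finite A \<Longrightarrow> (\<And>a. a \<in> A \<Longrightarrow> smooth_on U (f a)) \<Longrightarrow> smooth_on U (\<lambda>y. \<Prod>a\<in>A. f a y)"
  by (induction A rule: finite_induct) (simp_all add: smooth_on_mult smooth_on_const)

lemma smooth_on_pd: "smooth_on U f \<Longrightarrow> smooth_on U (pd i f)"
  unfolding smooth_on_def by (metis iter_pd_append)

lemma smooth_on_differentiable_at: "smooth_on U f \<Longrightarrow> x \<in> U \<Longrightarrow> f differentiable (at x)"
  using smooth_upto_on_differentiable_at[OF _ open_U] by (auto simp: smooth_on_iff_upto)

lemma smooth_on_cong: "smooth_on U f \<Longrightarrow> (\<And>y. y \<in> U \<Longrightarrow> f y = h y) \<Longrightarrow> smooth_on U h"
  using smooth_upto_on_cong[of f h] by (simp add: smooth_on_iff_upto)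

lemma smooth_on_det:
  "(\<And>a b. smooth_on U (\<lambda>y. F y a b)) \<Longrightarrow> smooth_on U (\<lambda>y. det (\<chi> a b. F y a b))"
  unfolding det_def
  by (intro smooth_on_sum smooth_on_mult smooth_on_const smooth_on_prod finite) simp

lemma pd_add_smooth:
  "smooth_on U f \<Longrightarrow> smooth_on U h \<Longrightarrow> x \<in> U \<Longrightarrow> pd i (\<lambda>y. f y + h y) x = pd i f x + pd i h x"
  by (intro pd_add smooth_on_differentiable_at)

lemma pd_diff_smooth:
  "smooth_on U f \<Longrightarrow> smooth_on U h \<Longrightarrow> x \<in> U \<Longrightarrow> pd i (\<lambda>y. f y - h y) x = pd i f x - pd i h x"
  by (intro pd_diff smooth_on_differentiable_at)

lemma pd_minus_smooth: "smooth_on U f \<Longrightarrow> x \<in> U \<Longrightarrow> pd i (\<lambda>y. - f y) x = - pd i f x"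
  by (intro pd_minus smooth_on_differentiable_at)

lemma pd_mult_smooth:
  "smooth_on U f \<Longrightarrow> smooth_on U h \<Longrightarrow> x \<in> U \<Longrightarrow> pd i (\<lambda>y. f y * h y) x = pd i f x * h x + f x * pd i h x"
  by (intro pd_mult smooth_on_differentiable_at)

lemma pd_divide_const_smooth: "smooth_on U f \<Longrightarrow> x \<in> U \<Longrightarrow> pd i (\<lambda>y. f y / c) x = pd i f x / c"
  using pd_mult_smooth[OF _ smooth_on_const, of f x i "1 / c"] by (simp add: pd_const)

lemma pd_sum_smooth:
  "(\<And>a. smooth_on U (f a)) \<Longrightarrow> x \<in> U \<Longrightarrow> pd i (\<lambda>y. \<Sum>a\<in>A. f a y) x = (\<Sum>a\<in>A. pd i (f a) x)"
  by (intro pd_sum smooth_on_differentiable_at)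

end

section \<open>Symmetry of second partial derivatives\<close>

lemma has_real_derivative_along_line:
  assumes "f differentiable (at (z + t *\<^sub>R e))"
  shows "((\<lambda>t. f (z + t *\<^sub>R e)) has_real_derivative frechet_derivative f (at (z + t *\<^sub>R e)) e) (at t)"
proof -
  let ?D = "frechet_derivative f (at (z + t *\<^sub>R e))"
  have D: "(f has_derivative ?D) (at (z + t *\<^sub>R e))"
    using assms frechet_derivative_works by blast
  have "((\<lambda>t. z + t *\<^sub>R e) has_derivative (\<lambda>s. s *\<^sub>R e)) (at t)"
    by (intro derivative_eq_intros) auto
  from has_derivative_compose[OF this D]
  have "((\<lambda>t. f (z + t *\<^sub>R e)) has_derivative (\<lambda>s. ?D (s *\<^sub>R e))) (at t)"
    by (simp add: o_def)
  moreover have "(\<lambda>s. ?D (s *\<^sub>R e)) = (*) (?D e)"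
    using has_derivative_bounded_linear[OF D] by (auto simp: fun_eq_iff linear_simps)
  ultimately show ?thesis unfolding has_field_derivative_def by simp
qed

lemma second_difference_mvt:
  fixes f :: "real^'n::finite \<Rightarrow> real"
  assumes U: "open U" and f: "smooth_on U f" and ball: "ball x r \<subseteq> U" and h: "0 < h" "2 * h < r"
  shows "\<exists>\<xi>. dist \<xi> x < 2 * h \<and>
    f (x + h *\<^sub>R axis i 1 + h *\<^sub>R axis j 1) - f (x + h *\<^sub>R axis i 1) - f (x + h *\<^sub>R axis j 1) + f x
     = h * h * pd j (pd i f) \<xi>"
proof -
  let ?e = "axis i (1::real)" and ?d = "axis j (1::real)"
  have dist_square: "dist (x + s *\<^sub>R ?e + t *\<^sub>R ?d) x \<le> s + t" if "0 \<le> s" "0 \<le> t" for s t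
    using norm_triangle_ineq[of "s *\<^sub>R ?e" "t *\<^sub>R ?d"] that by (simp add: dist_norm)
  have in_U: "x + s *\<^sub>R ?e + t *\<^sub>R ?d \<in> U" if "0 \<le> s" "s \<le> h" "0 \<le> t" "t \<le> h" for s t
    using dist_square[of s t] that h ball by (auto simp: dist_commute)
  have diff: "g differentiable (at y)" if "smooth_on U g" "y \<in> U" for g y
    using smooth_on_differentiable_at[OF U that] .
  define \<phi> where "\<phi> t = f (x + h *\<^sub>R ?d + t *\<^sub>R ?e) - f (x + t *\<^sub>R ?e)" for t
  have d\<phi>: "(\<phi> has_real_derivative (pd i f (x + h *\<^sub>R ?d + t *\<^sub>R ?e) - pd i f (x + t *\<^sub>R ?e))) (at t)"
    if "0 \<le> t" "t \<le> h" for t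
    unfolding \<phi>_def pd_def
  proof (intro DERIV_diff has_real_derivative_along_line diff[OF f])
    show "x + h *\<^sub>R ?d + t *\<^sub>R ?e \<in> U" using in_U[of t h] that h by (simp add: algebra_simps)
    show "x + t *\<^sub>R ?e \<in> U" using in_U[of t 0] that h by simp
  qed
  obtain s where s: "0 < s" "s < h"
    "\<phi> h - \<phi> 0 = h * (pd i f (x + h *\<^sub>R ?d + s *\<^sub>R ?e) - pd i f (x + s *\<^sub>R ?e))"
    using MVT2[of 0 h \<phi> "\<lambda>t. pd i f (x + h *\<^sub>R ?d + t *\<^sub>R ?e) - pd i f (x + t *\<^sub>R ?e)", OF h(1) d\<phi>]
    by auto
  define \<psi> where "\<psi> t = pd i f (x + s *\<^sub>R ?e + t *\<^sub>R ?d)" for t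
  have d\<psi>: "(\<psi> has_real_derivative pd j (pd i f) (x + s *\<^sub>R ?e + t *\<^sub>R ?d)) (at t)"
    if "0 \<le> t" "t \<le> h" for t
    unfolding \<psi>_def pd_def[of j]
    using in_U[of s t] that s by (intro has_real_derivative_along_line diff smooth_on_pd[OF U f]) simp
  obtain \<sigma> where \<sigma>: "0 < \<sigma>" "\<sigma> < h" "\<psi> h - \<psi> 0 = h * pd j (pd i f) (x + s *\<^sub>R ?e + \<sigma> *\<^sub>R ?d)"
    using MVT2[of 0 h \<psi> "\<lambda>t. pd j (pd i f) (x + s *\<^sub>R ?e + t *\<^sub>R ?d)", OF h(1) d\<psi>] by auto
  have "f (x + h *\<^sub>R ?e + h *\<^sub>R ?d) - f (x + h *\<^sub>R ?e) - f (x + h *\<^sub>R ?d) + f x = \<phi> h - \<phi> 0"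
    unfolding \<phi>_def by (simp add: algebra_simps)
  also have "\<dots> = h * (\<psi> h - \<psi> 0)" using s unfolding \<psi>_def by (simp add: algebra_simps)
  also have "\<dots> = h * h * pd j (pd i f) (x + s *\<^sub>R ?e + \<sigma> *\<^sub>R ?d)" using \<sigma> by simp
  finally show ?thesis
    using dist_square[of s \<sigma>] s \<sigma> by (intro exI[of _ "x + s *\<^sub>R ?e + \<sigma> *\<^sub>R ?d"]) auto
qed

lemma pd_commute:
  fixes f :: "real^'n::finite \<Rightarrow> real"
  assumes U: "open U" and f: "smooth_on U f" and x: "x \<in> U"
  shows "pd i (pd j f) x = pd j (pd i f) x"
proof (rule ccontr)
  assume ne: "pd i (pd j f) x \<noteq> pd j (pd i f) x"
  define \<epsilon> where "\<epsilon> = \<bar>pd i (pd j f) x - pd j (pd i f) x\<bar> / 2"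
  have \<epsilon>: "\<epsilon> > 0" using ne by (simp add: \<epsilon>_def)
  obtain r where r: "r > 0" "ball x r \<subseteq> U" using U x open_contains_ball by blast
  have "continuous (at x) (pd k (pd l f))" for k l
    using smooth_on_differentiable_at[OF U smooth_on_pd[OF U smooth_on_pd[OF U f]] x]
    by (rule differentiable_imp_continuous_within)
  then have "\<exists>d>0. \<forall>y. dist y x < d \<longrightarrow> dist (pd k (pd l f) y) (pd k (pd l f) x) < \<epsilon>" for k l
    using \<epsilon> unfolding continuous_at_eps_delta by blast
  then obtain d1 d2 where
    d1: "d1 > 0" "\<And>y. dist y x < d1 \<Longrightarrow> dist (pd i (pd j f) y) (pd i (pd j f) x) < \<epsilon>" and
    d2: "d2 > 0" "\<And>y. dist y x < d2 \<Longrightarrow> dist (pd j (pd i f) y) (pd j (pd i f) x) < \<epsilon>"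
    by blast
  define h where "h = min r (min d1 d2) / 4"
  have h: "0 < h" "2 * h < r" "2 * h < d1" "2 * h < d2" using r d1 d2 by (auto simp: h_def)
  obtain \<xi> where \<xi>: "dist \<xi> x < 2 * h"
    "f (x + h *\<^sub>R axis i 1 + h *\<^sub>R axis j 1) - f (x + h *\<^sub>R axis i 1) - f (x + h *\<^sub>R axis j 1) + f x
     = h * h * pd j (pd i f) \<xi>"
    using second_difference_mvt[OF U f r(2) h(1,2), of i j] by blast
  obtain \<eta> where \<eta>: "dist \<eta> x < 2 * h"
    "f (x + h *\<^sub>R axis j 1 + h *\<^sub>R axis i 1) - f (x + h *\<^sub>R axis j 1) - f (x + h *\<^sub>R axis i 1) + f x
     = h * h * pd i (pd j f) \<eta>"
    using second_difference_mvt[OF U f r(2) h(1,2), of j i] by blast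
  have "pd j (pd i f) \<xi> = pd i (pd j f) \<eta>"
    using \<xi>(2) \<eta>(2) h(1) by (simp add: algebra_simps)
  moreover have "dist (pd j (pd i f) \<xi>) (pd j (pd i f) x) < \<epsilon>" using d2 \<xi>(1) h by simp
  moreover have "dist (pd i (pd j f) \<eta>) (pd i (pd j f) x) < \<epsilon>" using d1 \<eta>(1) h by simp
  ultimately have "\<bar>pd i (pd j f) x - pd j (pd i f) x\<bar> < 2 * \<epsilon>"
    by (simp add: dist_real_def)
  then show False by (simp add: \<epsilon>_def)
qed

section \<open>The metric, its inverse and the Christoffel symbols\<close>

definition metric_matrix :: "(real^'n::finite \<Rightarrow> 'n \<Rightarrow> 'n \<Rightarrow> real) \<Rightarrow> real^'n \<Rightarrow> real^'n^'n" where
  "metric_matrix g y = (\<chi> a b. g y a b)"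

lemma ginv_metric_matrix: "ginv g y i j = matrix_inv (metric_matrix g y) $ i $ j"
  by (simp add: ginv_def metric_matrix_def)

locale riemannian_chart =
  fixes U :: "(real^'n::finite) set" and g :: "real^'n \<Rightarrow> 'n \<Rightarrow> 'n \<Rightarrow> real"
  assumes riemannian_metric: "riemannian_metric U g"
begin

lemma open_U: "open U"
  using riemannian_metric unfolding riemannian_metric_def by blast

lemma smooth_metric: "smooth_on U (\<lambda>y. g y i j)"
  using riemannian_metric unfolding riemannian_metric_def by blast

lemma metric_sym: "y \<in> U \<Longrightarrow> g y i j = g y j i"
  using riemannian_metric unfolding riemannian_metric_def by blast

lemma metric_pos_def: "y \<in> U \<Longrightarrow> v \<noteq> (\<lambda>_. 0) \<Longrightarrow> (\<Sum>i\<in>UNIV. \<Sum>j\<in>UNIV. g y i j * v i * v j) > 0"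
  using riemannian_metric unfolding riemannian_metric_def by blast

lemma metric_matrix_inverse:
  assumes y: "y \<in> U"
  shows "metric_matrix g y ** matrix_inv (metric_matrix g y) = mat 1
    \<and> matrix_inv (metric_matrix g y) ** metric_matrix g y = mat 1"
proof -
  let ?G = "metric_matrix g y"
  have "v = 0" if "?G *v v = 0" for v
  proof (rule ccontr)
    assume "v \<noteq> 0"
    then have "(\<lambda>i. v $ i) \<noteq> (\<lambda>_. 0)" by (auto simp: vec_eq_iff fun_eq_iff)
    then have "(\<Sum>i\<in>UNIV. \<Sum>j\<in>UNIV. g y i j * v $ i * v $ j) > 0" using metric_pos_def[OF y] by blast
    moreover have "(\<Sum>i\<in>UNIV. \<Sum>j\<in>UNIV. g y i j * v $ i * v $ j) = (\<Sum>i\<in>UNIV. v $ i * (?G *v v) $ i)"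
      by (simp add: matrix_vector_mult_def metric_matrix_def sum_distrib_left algebra_simps)
    ultimately show False using that by simp
  qed
  then obtain B where "B ** ?G = mat 1" using matrix_left_invertible_ker by blast
  then have "?G ** B = mat 1 \<and> B ** ?G = mat 1" using matrix_left_right_inverse by blast
  then show ?thesis unfolding matrix_inv_def by (rule someI)
qed

lemma metric_ginv: "y \<in> U \<Longrightarrow> (\<Sum>k\<in>UNIV. g y i k * ginv g y k j) = (if i = j then 1 else 0)"
  using metric_matrix_inverse[of y] unfolding ginv_metric_matrix
  by (auto simp: vec_eq_iff matrix_matrix_mult_def mat_def metric_matrix_def)

lemma ginv_metric: "y \<in> U \<Longrightarrow> (\<Sum>k\<in>UNIV. ginv g y i k * g y k j) = (if i = j then 1 else 0)"
  using metric_matrix_inverse[of y] unfolding ginv_metric_matrix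
  by (auto simp: vec_eq_iff matrix_matrix_mult_def mat_def metric_matrix_def)

lemma ginv_sym:
  assumes y: "y \<in> U"
  shows "ginv g y i j = ginv g y j i"
proof -
  let ?G = "metric_matrix g y" let ?A = "matrix_inv ?G"
  have "transpose ?G = ?G" using metric_sym[OF y] by (simp add: transpose_def metric_matrix_def vec_eq_iff)
  then have "transpose ?A ** ?G = mat 1"
    using metric_matrix_inverse[OF y] matrix_transpose_mul[of ?G ?A] by simp
  then have "transpose ?A = ?A"
    using metric_matrix_inverse[OF y] by (metis matrix_mul_assoc matrix_mul_lid matrix_mul_rid)
  then show ?thesis unfolding ginv_metric_matrix by (metis transpose_def vec_lambda_beta)
qed

lemma metric_ginv_contract:
  "y \<in> U \<Longrightarrow> (\<Sum>k\<in>UNIV. g y m k * (\<Sum>l\<in>UNIV. ginv g y k l * F l)) = F m"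
  by (simp only: sum_mult_sum_swap metric_ginv sum_delta_mult)

lemma ginv_metric_contract:
  "y \<in> U \<Longrightarrow> (\<Sum>k\<in>UNIV. ginv g y m k * (\<Sum>l\<in>UNIV. g y k l * F l)) = F m"
  by (simp only: sum_mult_sum_swap ginv_metric sum_delta_mult)

text \<open>Cramer's rule writes the inverse metric as a quotient of polynomials in the metric
  components; this is what makes it smooth.\<close>

lemma ginv_cramer:
  assumes y: "y \<in> U"
  shows "ginv g y i j = det (\<chi> a b. if b = i then axis j 1 $ a else g y a b) / det (metric_matrix g y)"
proof -
  let ?G = "metric_matrix g y" let ?x = "matrix_inv ?G *v axis j 1"
  have det: "det ?G \<noteq> 0"
    using metric_matrix_inverse[OF y] invertible_def invertible_det_nz by blast
  have "?G *v ?x = axis j 1"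
    using metric_matrix_inverse[OF y] by (simp add: matrix_vector_mul_assoc)
  then have "?x $ i = det (\<chi> a b. if b = i then axis j 1 $ a else ?G $ a $ b) / det ?G"
    using cramer[OF det] by simp
  moreover have "?x $ i = ginv g y i j"
    by (simp add: matrix_vector_mult_def ginv_metric_matrix axis_def if_distrib cong: if_cong)
  moreover have "(\<chi> a b. if b = i then axis j 1 $ a else ?G $ a $ b)
      = (\<chi> a b. if b = i then axis j 1 $ a else g y a b)"
    by (simp add: vec_eq_iff metric_matrix_def)
  ultimately show ?thesis by simp
qed

lemma smooth_ginv: "smooth_on U (\<lambda>y. ginv g y i j)"
proof (rule smooth_on_cong[OF open_U smooth_on_mult[OF open_U]])
  have "smooth_on U (\<lambda>y. if b = i then axis j 1 $ a else g y a b)" for a b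
    by (cases "b = i") (simp_all add: smooth_on_const[OF open_U] smooth_metric)
  then show "smooth_on U (\<lambda>y. det (\<chi> a b. if b = i then axis j 1 $ a else g y a b))"
    by (intro smooth_on_det open_U)
  have "det (metric_matrix g y) \<noteq> 0" if "y \<in> U" for y
    using metric_matrix_inverse[OF that] invertible_def invertible_det_nz by blast
  then show "smooth_on U (\<lambda>y. 1 / det (metric_matrix g y))"
    unfolding metric_matrix_def by (intro smooth_on_inverse smooth_on_det open_U smooth_metric) auto
qed (simp add: ginv_cramer)

lemmas smooth_simps[simp] =
  smooth_on_const[OF open_U] smooth_on_add[OF open_U] smooth_on_diff[OF open_U]
  smooth_on_minus[OF open_U] smooth_on_mult[OF open_U] smooth_on_divide_const[OF open_U]
  smooth_on_sum[OF open_U finite] smooth_on_pd[OF open_U] smooth_metric smooth_ginv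

lemmas pd_simps =
  pd_add_smooth[OF open_U] pd_diff_smooth[OF open_U] pd_minus_smooth[OF open_U]
  pd_mult_smooth[OF open_U] pd_divide_const_smooth[OF open_U] pd_sum_smooth[OF open_U] pd_const

lemma pd_metric_sym: "y \<in> U \<Longrightarrow> pd k (\<lambda>z. g z i j) y = pd k (\<lambda>z. g z j i) y"
  by (rule pd_cong_open[OF open_U]) (auto simp: metric_sym)

lemma christoffel_sym: "y \<in> U \<Longrightarrow> christoffel g y k i j = christoffel g y k j i"
  unfolding christoffel_def using pd_metric_sym[of y _ i j] by (simp add: algebra_simps)

lemma smooth_christoffel[simp]: "smooth_on U (\<lambda>y. christoffel g y k i j)"
  unfolding christoffel_def by simp

lemma metric_christoffel:
  assumes y: "y \<in> U"
  shows "(\<Sum>k\<in>UNIV. g y m k * christoffel g y k i j)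
     = (1/2) * (pd i (\<lambda>z. g z j m) y + pd j (\<lambda>z. g z i m) y - pd m (\<lambda>z. g z i j) y)"
proof -
  have "(\<Sum>k\<in>UNIV. g y m k * christoffel g y k i j) = (1/2) * (\<Sum>k\<in>UNIV. g y m k * (\<Sum>l\<in>UNIV.
     ginv g y k l * (pd i (\<lambda>y. g y j l) y + pd j (\<lambda>y. g y i l) y - pd l (\<lambda>y. g y i j) y)))"
    unfolding christoffel_def by (simp add: sum_distrib_left mult_ac)
  then show ?thesis by (simp only: metric_ginv_contract[OF y])
qed

lemma pd_metric:
  "y \<in> U \<Longrightarrow> pd k (\<lambda>z. g z i j) y
     = (\<Sum>l\<in>UNIV. g y i l * christoffel g y l k j) + (\<Sum>l\<in>UNIV. g y j l * christoffel g y l k i)"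
  using pd_metric_sym[of y k i j] pd_metric_sym[of y j k i] pd_metric_sym[of y i k j]
  by (simp add: metric_christoffel algebra_simps)

lemma pd_ginv:
  assumes y: "y \<in> U"
  shows "pd k (\<lambda>z. ginv g z i m) y = - (\<Sum>l\<in>UNIV. christoffel g y i k l * ginv g y l m)
     - (\<Sum>l\<in>UNIV. christoffel g y m k l * ginv g y i l)"
proof -
  have E: "(\<Sum>l\<in>UNIV. pd k (\<lambda>z. ginv g z i l) y * g y l j)
      = - (\<Sum>l\<in>UNIV. ginv g y i l * pd k (\<lambda>z. g z l j) y)" for j
  proof -
    have "pd k (\<lambda>z. \<Sum>l\<in>UNIV. ginv g z i l * g z l j) y = pd k (\<lambda>z. if i = j then 1 else 0) y"
      by (rule pd_cong_open[OF open_U y]) (simp add: ginv_metric)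
    then show ?thesis using y by (simp add: pd_simps sum.distrib eq_neg_iff_add_eq_0)
  qed
  have "pd k (\<lambda>z. ginv g z i m) y
      = (\<Sum>l\<in>UNIV. pd k (\<lambda>z. ginv g z i l) y * (\<Sum>j\<in>UNIV. g y l j * ginv g y j m))"
    by (simp add: metric_ginv[OF y] if_distrib cong: if_cong)
  also have "\<dots> = (\<Sum>j\<in>UNIV. (\<Sum>l\<in>UNIV. pd k (\<lambda>z. ginv g z i l) y * g y l j) * ginv g y j m)"
    by (rule sum_mult_sum_swap)
  also have "\<dots> = (\<Sum>j\<in>UNIV. - (\<Sum>l\<in>UNIV. ginv g y i l * pd k (\<lambda>z. g z l j) y) * ginv g y j m)"
    by (simp only: E)
  also have "\<dots> = - (\<Sum>j\<in>UNIV. (\<Sum>l\<in>UNIV. ginv g y i l * (\<Sum>p\<in>UNIV. g y l p * christoffel g y p k j))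
                      * ginv g y j m)
      - (\<Sum>j\<in>UNIV. (\<Sum>l\<in>UNIV. ginv g y i l * (\<Sum>p\<in>UNIV. g y j p * christoffel g y p k l))
                      * ginv g y j m)"
    by (simp add: pd_metric[OF y] algebra_simps sum.distrib sum_subtractf sum_negf)
  also have "(\<Sum>j\<in>UNIV. (\<Sum>l\<in>UNIV. ginv g y i l * (\<Sum>p\<in>UNIV. g y l p * christoffel g y p k j))
                * ginv g y j m)
      = (\<Sum>l\<in>UNIV. christoffel g y i k l * ginv g y l m)"
    by (simp only: ginv_metric_contract[OF y])
  also have "(\<Sum>j\<in>UNIV. (\<Sum>l\<in>UNIV. ginv g y i l * (\<Sum>p\<in>UNIV. g y j p * christoffel g y p k l))
                * ginv g y j m)
      = (\<Sum>l\<in>UNIV. ginv g y i l * (\<Sum>j\<in>UNIV. ginv g y m j * (\<Sum>p\<in>UNIV. g y j p * christoffel g y p k l)))"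
    by (simp add: sum_distrib_left sum_distrib_right ginv_sym[OF y, of _ m] mult_ac) (rule sum.swap)
  also have "\<dots> = (\<Sum>l\<in>UNIV. ginv g y i l * christoffel g y m k l)"
    by (simp only: ginv_metric_contract[OF y])
  finally show ?thesis by (simp add: mult_ac)
qed

end

section \<open>Covariant derivatives of tensor fields\<close>

definition cov_d2 ::
  "(real^'n::finite \<Rightarrow> 'n \<Rightarrow> 'n \<Rightarrow> real) \<Rightarrow> (real^'n \<Rightarrow> 'n \<Rightarrow> 'n \<Rightarrow> real) \<Rightarrow> real^'n \<Rightarrow> 'n \<Rightarrow> 'n \<Rightarrow> 'n \<Rightarrow> real"
  where "cov_d2 g T y c a b = pd c (\<lambda>z. T z a b) y
     - (\<Sum>d\<in>UNIV. christoffel g y d c a * T y d b) - (\<Sum>d\<in>UNIV. christoffel g y d c b * T y a d)"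

context riemannian_chart
begin

lemma smooth_cov_d[simp]: "(\<And>a. smooth_on U (\<lambda>y. V y a)) \<Longrightarrow> smooth_on U (\<lambda>y. cov_d g V y i j)"
  unfolding cov_d_def by simp

lemma smooth_raise[simp]: "(\<And>a. smooth_on U (\<lambda>y. V y a)) \<Longrightarrow> smooth_on U (\<lambda>y. raise g V y b)"
  unfolding raise_def by simp

lemma smooth_divg[simp]: "(\<And>a. smooth_on U (\<lambda>y. V y a)) \<Longrightarrow> smooth_on U (\<lambda>y. divg g V y)"
  unfolding divg_def by simp

lemma smooth_sym_cov_d[simp]:
  "(\<And>a. smooth_on U (\<lambda>y. V y a)) \<Longrightarrow> smooth_on U (\<lambda>y. sym_cov_d g V y i j)"
  unfolding sym_cov_d_def by simp

lemma smooth_grad[simp]: "smooth_on U f \<Longrightarrow> smooth_on U (\<lambda>y. grad f y a)"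
  unfolding grad_def by simp

lemma smooth_laplacian[simp]: "smooth_on U f \<Longrightarrow> smooth_on U (\<lambda>y. laplacian g f y)"
  unfolding laplacian_def by simp

lemma cov_d2_cong:
  assumes x: "x \<in> U" and "\<And>y a b. y \<in> U \<Longrightarrow> S y a b = T y a b"
  shows "cov_d2 g S x c i j = cov_d2 g T x c i j"
proof -
  have "pd c (\<lambda>y. S y i j) x = pd c (\<lambda>y. T y i j) x" by (rule pd_cong_open[OF open_U x]) (simp add: assms)
  then show ?thesis unfolding cov_d2_def using assms by simp
qed

lemma cov_d_add:
  "(\<And>a. smooth_on U (\<lambda>y. V y a)) \<Longrightarrow> (\<And>a. smooth_on U (\<lambda>y. W y a)) \<Longrightarrow> x \<in> U \<Longrightarrow>
    cov_d g (\<lambda>y a. V y a + W y a) x i j = cov_d g V x i j + cov_d g W x i j"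
  unfolding cov_d_def by (simp add: pd_simps sum.distrib algebra_simps)

lemma cov_d_diff:
  "(\<And>a. smooth_on U (\<lambda>y. V y a)) \<Longrightarrow> (\<And>a. smooth_on U (\<lambda>y. W y a)) \<Longrightarrow> x \<in> U \<Longrightarrow>
    cov_d g (\<lambda>y a. V y a - W y a) x i j = cov_d g V x i j - cov_d g W x i j"
  unfolding cov_d_def by (simp add: pd_simps sum_subtractf algebra_simps)

lemma cov_d_scale:
  "smooth_on U f \<Longrightarrow> (\<And>a. smooth_on U (\<lambda>y. V y a)) \<Longrightarrow> x \<in> U \<Longrightarrow>
    cov_d g (\<lambda>y a. f y * V y a) x i j = pd i f x * V x j + f x * cov_d g V x i j"
  unfolding cov_d_def by (simp add: pd_simps sum_distrib_left algebra_simps)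

lemma cov_d2_add:
  "(\<And>a b. smooth_on U (\<lambda>y. S y a b)) \<Longrightarrow> (\<And>a b. smooth_on U (\<lambda>y. T y a b)) \<Longrightarrow> x \<in> U \<Longrightarrow>
    cov_d2 g (\<lambda>y a b. S y a b + T y a b) x c i j = cov_d2 g S x c i j + cov_d2 g T x c i j"
  unfolding cov_d2_def by (simp add: pd_simps sum.distrib algebra_simps)

lemma cov_d2_diff:
  "(\<And>a b. smooth_on U (\<lambda>y. S y a b)) \<Longrightarrow> (\<And>a b. smooth_on U (\<lambda>y. T y a b)) \<Longrightarrow> x \<in> U \<Longrightarrow>
    cov_d2 g (\<lambda>y a b. S y a b - T y a b) x c i j = cov_d2 g S x c i j - cov_d2 g T x c i j"
  unfolding cov_d2_def by (simp add: pd_simps sum_subtractf algebra_simps)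

lemma cov_d2_scale:
  "smooth_on U f \<Longrightarrow> (\<And>a b. smooth_on U (\<lambda>y. T y a b)) \<Longrightarrow> x \<in> U \<Longrightarrow>
    cov_d2 g (\<lambda>y a b. f y * T y a b) x c i j = pd c f x * T x i j + f x * cov_d2 g T x c i j"
  unfolding cov_d2_def by (simp add: pd_simps sum_distrib_left algebra_simps)

lemma cov_d2_tensor:
  "(\<And>a. smooth_on U (\<lambda>y. V y a)) \<Longrightarrow> (\<And>a. smooth_on U (\<lambda>y. W y a)) \<Longrightarrow> x \<in> U \<Longrightarrow>
    cov_d2 g (\<lambda>y a b. V y a * W y b) x c i j = cov_d g V x c i * W x j + V x i * cov_d g W x c j"
  unfolding cov_d2_def cov_d_def
  by (simp add: pd_simps sum_distrib_left sum_distrib_right algebra_simps)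

lemma cov_d2_transpose: "cov_d2 g (\<lambda>y a b. T y b a) x c i j = cov_d2 g T x c j i"
  unfolding cov_d2_def by (simp add: algebra_simps)

lemma cov_d2_metric:
  assumes x: "x \<in> U"
  shows "cov_d2 g g x c i j = 0"
  unfolding cov_d2_def pd_metric[OF x] using metric_sym[OF x] by (simp add: mult_ac)

lemma cov_d2_sym_cov_d:
  assumes V: "\<And>a. smooth_on U (\<lambda>y. V y a)" and x: "x \<in> U"
  shows "cov_d2 g (sym_cov_d g V) x c i j = (cov_d2 g (cov_d g V) x c i j + cov_d2 g (cov_d g V) x c j i) / 2"
proof -
  have "sym_cov_d g V = (\<lambda>y a b. (1/2) * (cov_d g V y a b + cov_d g V y b a))"
    by (simp add: fun_eq_iff sym_cov_d_def)
  then have "cov_d2 g (sym_cov_d g V) x c i j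
      = cov_d2 g (\<lambda>y a b. (1/2) * (cov_d g V y a b + cov_d g V y b a)) x c i j"
    by (simp only:)
  also have "\<dots> = (1/2) * cov_d2 g (\<lambda>y a b. cov_d g V y a b + cov_d g V y b a) x c i j"
    using cov_d2_scale[of "\<lambda>y. 1/2" "\<lambda>y a b. cov_d g V y a b + cov_d g V y b a" x c i j] V x
    by (simp only: pd_const mult_zero_left add_0_left smooth_simps smooth_cov_d)
  also have "\<dots> = (1/2) * (cov_d2 g (cov_d g V) x c i j + cov_d2 g (\<lambda>y a b. cov_d g V y b a) x c i j)"
    using cov_d2_add[of "cov_d g V" "\<lambda>y a b. cov_d g V y b a" x c i j] V x by (simp only: smooth_cov_d)
  finally show ?thesis using cov_d2_transpose[of "cov_d g V" x c i j] by simp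
qed

lemma pd_raise:
  assumes V: "\<And>a. smooth_on U (\<lambda>y. V y a)" and x: "x \<in> U"
  shows "pd i (\<lambda>y. raise g V y b) x
    = (\<Sum>e\<in>UNIV. ginv g x b e * cov_d g V x i e) - (\<Sum>l\<in>UNIV. christoffel g x b i l * raise g V x l)"
proof -
  have "pd i (\<lambda>y. raise g V y b) x = (\<Sum>e\<in>UNIV. ginv g x b e * pd i (\<lambda>y. V y e) x)
     - (\<Sum>e\<in>UNIV. (\<Sum>l\<in>UNIV. christoffel g x b i l * ginv g x l e) * V x e)
     - (\<Sum>e\<in>UNIV. (\<Sum>l\<in>UNIV. christoffel g x e i l * ginv g x b l) * V x e)"
    unfolding raise_def using V x by (simp add: pd_simps pd_ginv sum.distrib sum_subtractf algebra_simps)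
  moreover have "(\<Sum>e\<in>UNIV. (\<Sum>l\<in>UNIV. christoffel g x b i l * ginv g x l e) * V x e)
     = (\<Sum>l\<in>UNIV. christoffel g x b i l * raise g V x l)"
    unfolding raise_def by (simp add: sum_mult_sum_swap[symmetric])
  moreover have "(\<Sum>e\<in>UNIV. (\<Sum>l\<in>UNIV. christoffel g x e i l * ginv g x b l) * V x e)
     = (\<Sum>l\<in>UNIV. ginv g x b l * (\<Sum>e\<in>UNIV. christoffel g x e i l * V x e))"
    by (simp add: sum_distrib_left sum_distrib_right mult_ac) (rule sum.swap)
  ultimately show ?thesis unfolding cov_d_def by (simp add: right_diff_distrib sum_subtractf)
qed

lemma cov_d_contract:
  assumes V: "\<And>a. smooth_on U (\<lambda>y. V y a)" and T: "\<And>a b. smooth_on U (\<lambda>y. T y a b)" and x: "x \<in> U"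
  shows "cov_d g (\<lambda>y a. \<Sum>b\<in>UNIV. raise g V y b * T y a b) x i a
    = (\<Sum>b\<in>UNIV. (\<Sum>e\<in>UNIV. ginv g x b e * cov_d g V x i e) * T x a b)
      + (\<Sum>b\<in>UNIV. raise g V x b * cov_d2 g T x i a b)"
proof -
  have "cov_d g (\<lambda>y a. \<Sum>b\<in>UNIV. raise g V y b * T y a b) x i a
    = (\<Sum>b\<in>UNIV. (\<Sum>e\<in>UNIV. ginv g x b e * cov_d g V x i e) * T x a b)
      - (\<Sum>b\<in>UNIV. (\<Sum>l\<in>UNIV. christoffel g x b i l * raise g V x l) * T x a b)
      + (\<Sum>b\<in>UNIV. raise g V x b * pd i (\<lambda>y. T y a b) x)
      - (\<Sum>k\<in>UNIV. christoffel g x k i a * (\<Sum>b\<in>UNIV. raise g V x b * T x k b))"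
    unfolding cov_d_def[of g "\<lambda>y a. \<Sum>b\<in>UNIV. raise g V y b * T y a b"] using V T x
    by (simp add: pd_simps pd_raise sum.distrib sum_subtractf algebra_simps)
  moreover have "(\<Sum>b\<in>UNIV. (\<Sum>l\<in>UNIV. christoffel g x b i l * raise g V x l) * T x a b)
     = (\<Sum>b\<in>UNIV. raise g V x b * (\<Sum>d\<in>UNIV. christoffel g x d i b * T x a d))"
    by (simp add: sum_distrib_left sum_distrib_right mult_ac) (rule sum.swap)
  moreover have "(\<Sum>k\<in>UNIV. christoffel g x k i a * (\<Sum>b\<in>UNIV. raise g V x b * T x k b))
     = (\<Sum>b\<in>UNIV. raise g V x b * (\<Sum>d\<in>UNIV. christoffel g x d i a * T x d b))"
    by (simp add: sum_distrib_left mult_ac) (rule sum.swap)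
  ultimately show ?thesis unfolding cov_d2_def by (simp add: right_diff_distrib sum_subtractf sum.distrib)
qed

lemma pd_trace:
  assumes T: "\<And>a b. smooth_on U (\<lambda>y. T y a b)" and x: "x \<in> U"
  shows "pd b (\<lambda>y. \<Sum>a\<in>UNIV. \<Sum>c\<in>UNIV. ginv g y a c * T y a c) x
    = (\<Sum>a\<in>UNIV. \<Sum>c\<in>UNIV. ginv g x a c * cov_d2 g T x b a c)"
proof -
  have "pd b (\<lambda>y. \<Sum>a\<in>UNIV. \<Sum>c\<in>UNIV. ginv g y a c * T y a c) x
    = (\<Sum>a\<in>UNIV. \<Sum>c\<in>UNIV. ginv g x a c * pd b (\<lambda>y. T y a c) x)
      - (\<Sum>a\<in>UNIV. \<Sum>c\<in>UNIV. (\<Sum>l\<in>UNIV. christoffel g x a b l * ginv g x l c) * T x a c)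
      - (\<Sum>a\<in>UNIV. \<Sum>c\<in>UNIV. (\<Sum>l\<in>UNIV. christoffel g x c b l * ginv g x a l) * T x a c)"
    using T x by (simp add: pd_simps pd_ginv sum.distrib sum_subtractf algebra_simps)
  moreover have "(\<Sum>a\<in>UNIV. \<Sum>c\<in>UNIV. (\<Sum>l\<in>UNIV. christoffel g x a b l * ginv g x l c) * T x a c)
    = (\<Sum>a\<in>UNIV. \<Sum>c\<in>UNIV. ginv g x a c * (\<Sum>d\<in>UNIV. christoffel g x d b a * T x d c))"
  proof -
    have "(\<Sum>a\<in>UNIV. \<Sum>c\<in>UNIV. (\<Sum>l\<in>UNIV. christoffel g x a b l * ginv g x l c) * T x a c)
      = (\<Sum>l\<in>UNIV. \<Sum>c\<in>UNIV. \<Sum>a\<in>UNIV. christoffel g x a b l * ginv g x l c * T x a c)"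
      by (simp add: sum_distrib_right) (rule sum_reverse3)
    then show ?thesis using christoffel_sym[OF x] by (simp add: sum_distrib_left mult_ac)
  qed
  moreover have "(\<Sum>a\<in>UNIV. \<Sum>c\<in>UNIV. (\<Sum>l\<in>UNIV. christoffel g x c b l * ginv g x a l) * T x a c)
    = (\<Sum>a\<in>UNIV. \<Sum>c\<in>UNIV. ginv g x a c * (\<Sum>d\<in>UNIV. christoffel g x d b c * T x a d))"
  proof -
    have "(\<Sum>a\<in>UNIV. \<Sum>c\<in>UNIV. (\<Sum>l\<in>UNIV. christoffel g x c b l * ginv g x a l) * T x a c)
      = (\<Sum>a\<in>UNIV. \<Sum>l\<in>UNIV. \<Sum>c\<in>UNIV. christoffel g x c b l * ginv g x a l * T x a c)"
      by (simp add: sum_distrib_right) (rule sum.cong[OF refl sum.swap])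
    then show ?thesis using christoffel_sym[OF x] by (simp add: sum_distrib_left mult_ac)
  qed
  ultimately show ?thesis unfolding cov_d2_def by (simp add: right_diff_distrib sum_subtractf)
qed

end

section \<open>Curvature and the Bianchi identities\<close>

definition riemann :: "(real^'n::finite \<Rightarrow> 'n \<Rightarrow> 'n \<Rightarrow> real) \<Rightarrow> real^'n \<Rightarrow> 'n \<Rightarrow> 'n \<Rightarrow> 'n \<Rightarrow> 'n \<Rightarrow> real"
  where "riemann g y a b c d = pd c (\<lambda>z. christoffel g z a d b) y - pd d (\<lambda>z. christoffel g z a c b) y
     + (\<Sum>e\<in>UNIV. christoffel g y a c e * christoffel g y e d b - christoffel g y a d e * christoffel g y e c b)"

definition christoffel_lower ::
  "(real^'n::finite \<Rightarrow> 'n \<Rightarrow> 'n \<Rightarrow> real) \<Rightarrow> real^'n \<Rightarrow> 'n \<Rightarrow> 'n \<Rightarrow> 'n \<Rightarrow> real"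
  where "christoffel_lower g y f e b = (\<Sum>a\<in>UNIV. g y f a * christoffel g y a e b)"

lemma riemann_antisym: "riemann g y a b c d = - riemann g y a b d c"
  unfolding riemann_def by (simp add: sum_subtractf algebra_simps)

context riemannian_chart
begin

lemma smooth_riemann[simp]: "smooth_on U (\<lambda>y. riemann g y a b c d)"
  unfolding riemann_def by simp

lemma smooth_ricci[simp]: "smooth_on U (\<lambda>y. ricci g y a b)"
  unfolding ricci_def by simp

lemma smooth_christoffel_lower[simp]: "smooth_on U (\<lambda>y. christoffel_lower g y f e b)"
  unfolding christoffel_lower_def by simp

lemma ricci_eq_riemann_trace:
  assumes x: "x \<in> U"
  shows "ricci g x b d = (\<Sum>a\<in>UNIV. riemann g x a b a d)"
proof -
  have "pd a (\<lambda>z. christoffel g z a d b) x = pd a (\<lambda>z. christoffel g z a b d) x" for a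
    by (rule pd_cong_open[OF open_U x]) (simp add: christoffel_sym)
  then show ?thesis unfolding ricci_def riemann_def
    using christoffel_sym[OF x] by (simp add: sum.distrib sum_subtractf)
qed

lemma cov_d2_cov_d_expand:
  assumes V: "\<And>a. smooth_on U (\<lambda>y. V y a)" and x: "x \<in> U"
  shows "cov_d2 g (cov_d g V) x c b a = pd c (pd b (\<lambda>w. V w a)) x
     - (\<Sum>e\<in>UNIV. pd c (\<lambda>z. christoffel g z e b a) x * V x e)
     - (\<Sum>e\<in>UNIV. christoffel g x e b a * pd c (\<lambda>z. V z e) x)
     - (\<Sum>d\<in>UNIV. christoffel g x d c b * pd d (\<lambda>w. V w a) x)
     + (\<Sum>d\<in>UNIV. christoffel g x d c b * (\<Sum>e\<in>UNIV. christoffel g x e d a * V x e))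
     - (\<Sum>d\<in>UNIV. christoffel g x d c a * pd b (\<lambda>w. V w d) x)
     + (\<Sum>d\<in>UNIV. christoffel g x d c a * (\<Sum>e\<in>UNIV. christoffel g x e b d * V x e))"
  unfolding cov_d2_def cov_d_def using x V
  by (simp add: pd_simps sum.distrib sum_subtractf right_diff_distrib)

lemma ricci_identity:
  assumes V: "\<And>a. smooth_on U (\<lambda>y. V y a)" and x: "x \<in> U"
  shows "cov_d2 g (cov_d g V) x c b a - cov_d2 g (cov_d g V) x b c a
    = - (\<Sum>d\<in>UNIV. riemann g x d a c b * V x d)"
proof -
  have "pd c (pd b (\<lambda>w. V w a)) x = pd b (pd c (\<lambda>w. V w a)) x"
    by (rule pd_commute[OF open_U V x])
  moreover have "christoffel g x d c b = christoffel g x d b c" for d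
    by (rule christoffel_sym[OF x])
  moreover have "(\<Sum>d\<in>UNIV. christoffel g x d c a * (\<Sum>e\<in>UNIV. christoffel g x e b d * V x e))
     = (\<Sum>d\<in>UNIV. (\<Sum>e\<in>UNIV. christoffel g x d b e * christoffel g x e c a) * V x d)" for b c
  proof -
    have "(\<Sum>d\<in>UNIV. christoffel g x d c a * (\<Sum>e\<in>UNIV. christoffel g x e b d * V x e))
      = (\<Sum>e\<in>UNIV. \<Sum>d\<in>UNIV. christoffel g x d c a * christoffel g x e b d * V x e)"
      by (simp add: sum_distrib_left mult.assoc) (rule sum.swap)
    then show ?thesis by (simp add: sum_distrib_left sum_distrib_right mult_ac)
  qed
  moreover have "(\<Sum>d\<in>UNIV. riemann g x d a c b * V x d)
     = (\<Sum>d\<in>UNIV. pd c (\<lambda>z. christoffel g z d b a) x * V x d)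
     - (\<Sum>d\<in>UNIV. pd b (\<lambda>z. christoffel g z d c a) x * V x d)
     + (\<Sum>d\<in>UNIV. (\<Sum>e\<in>UNIV. christoffel g x d c e * christoffel g x e b a) * V x d)
     - (\<Sum>d\<in>UNIV. (\<Sum>e\<in>UNIV. christoffel g x d b e * christoffel g x e c a) * V x d)"
    unfolding riemann_def by (simp add: sum_subtractf sum.distrib algebra_simps)
  ultimately show ?thesis
    unfolding cov_d2_cov_d_expand[OF V x] by simp
qed

lemma pd_christoffel_lower:
  assumes x: "x \<in> U"
  shows "pd d (\<lambda>z. christoffel_lower g z f e b) x
    = (\<Sum>a\<in>UNIV. g x f a * (\<Sum>k\<in>UNIV. christoffel g x a d k * christoffel g x k e b))
      + (\<Sum>l\<in>UNIV. christoffel g x l d f * christoffel_lower g x l e b)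
      + (\<Sum>a\<in>UNIV. g x f a * pd d (\<lambda>z. christoffel g z a e b) x)"
proof -
  have "pd d (\<lambda>z. christoffel_lower g z f e b) x
      = (\<Sum>a\<in>UNIV. pd d (\<lambda>z. g z f a) x * christoffel g x a e b)
        + (\<Sum>a\<in>UNIV. g x f a * pd d (\<lambda>z. christoffel g z a e b) x)"
    unfolding christoffel_lower_def using x by (simp add: pd_simps sum.distrib)
  moreover have "(\<Sum>a\<in>UNIV. pd d (\<lambda>z. g z f a) x * christoffel g x a e b)
      = (\<Sum>a\<in>UNIV. \<Sum>l\<in>UNIV. g x f l * christoffel g x l d a * christoffel g x a e b)
        + (\<Sum>a\<in>UNIV. \<Sum>l\<in>UNIV. g x a l * christoffel g x l d f * christoffel g x a e b)"
    by (simp add: pd_metric[OF x] distrib_right sum.distrib sum_distrib_right)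
  moreover have "(\<Sum>a\<in>UNIV. \<Sum>l\<in>UNIV. g x f l * christoffel g x l d a * christoffel g x a e b)
      = (\<Sum>a\<in>UNIV. g x f a * (\<Sum>k\<in>UNIV. christoffel g x a d k * christoffel g x k e b))"
    by (subst sum.swap) (simp add: sum_distrib_left mult.assoc)
  moreover have "(\<Sum>a\<in>UNIV. \<Sum>l\<in>UNIV. g x a l * christoffel g x l d f * christoffel g x a e b)
      = (\<Sum>l\<in>UNIV. christoffel g x l d f * christoffel_lower g x l e b)"
    unfolding christoffel_lower_def
    by (subst sum.swap) (simp add: sum_distrib_left mult_ac metric_sym[OF x])
  ultimately show ?thesis by simp
qed

lemma metric_riemann:
  assumes x: "x \<in> U"
  shows "(\<Sum>a\<in>UNIV. g x f a * riemann g x a b d e)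
    = pd d (\<lambda>z. christoffel_lower g z f e b) x - pd e (\<lambda>z. christoffel_lower g z f d b) x
      - (\<Sum>l\<in>UNIV. christoffel g x l d f * christoffel_lower g x l e b)
      + (\<Sum>l\<in>UNIV. christoffel g x l e f * christoffel_lower g x l d b)"
proof -
  have "(\<Sum>a\<in>UNIV. g x f a * riemann g x a b d e)
     = (\<Sum>a\<in>UNIV. g x f a * pd d (\<lambda>z. christoffel g z a e b) x)
       - (\<Sum>a\<in>UNIV. g x f a * pd e (\<lambda>z. christoffel g z a d b) x)
       + (\<Sum>a\<in>UNIV. g x f a * (\<Sum>k\<in>UNIV. christoffel g x a d k * christoffel g x k e b))
       - (\<Sum>a\<in>UNIV. g x f a * (\<Sum>k\<in>UNIV. christoffel g x a e k * christoffel g x k d b))"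
    unfolding riemann_def by (simp add: sum_subtractf sum.distrib algebra_simps)
  then show ?thesis unfolding pd_christoffel_lower[OF x] by simp
qed

text \<open>Antisymmetry in the first pair: the part of the derivative of the lowered Christoffel symbols
  that is symmetric in f and b is a second derivative of the metric, and these commute.\<close>

lemma metric_riemann_antisym:
  assumes x: "x \<in> U"
  shows "(\<Sum>a\<in>UNIV. g x f a * riemann g x a b d e) = - (\<Sum>a\<in>UNIV. g x b a * riemann g x a f d e)"
proof -
  have sum_lower: "christoffel_lower g z f e b + christoffel_lower g z b e f = pd e (\<lambda>w. g w f b) z"
    if "z \<in> U" for z e
    unfolding christoffel_lower_def pd_metric[OF that] using metric_sym[OF that] by (simp add: mult_ac)
  have pd_sum_lower: "pd d (\<lambda>z. christoffel_lower g z f e b) x + pd d (\<lambda>z. christoffel_lower g z b e f) x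
      = pd d (pd e (\<lambda>w. g w f b)) x" for d e
  proof -
    have "pd d (\<lambda>z. christoffel_lower g z f e b) x + pd d (\<lambda>z. christoffel_lower g z b e f) x
        = pd d (\<lambda>z. christoffel_lower g z f e b + christoffel_lower g z b e f) x"
      using x by (simp add: pd_simps)
    also have "\<dots> = pd d (pd e (\<lambda>w. g w f b)) x"
      by (rule pd_cong_open[OF open_U x]) (simp add: sum_lower)
    finally show ?thesis .
  qed
  have swap: "(\<Sum>l\<in>UNIV. christoffel g x l d f * christoffel_lower g x l e b)
      = (\<Sum>l\<in>UNIV. christoffel g x l e b * christoffel_lower g x l d f)" for d e f b
  proof -
    have "(\<Sum>l\<in>UNIV. christoffel g x l d f * christoffel_lower g x l e b)
        = (\<Sum>a\<in>UNIV. \<Sum>l\<in>UNIV. christoffel g x l d f * g x l a * christoffel g x a e b)"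
      unfolding christoffel_lower_def by (simp add: sum_distrib_left mult.assoc) (rule sum.swap)
    then show ?thesis
      unfolding christoffel_lower_def by (simp add: sum_distrib_left mult_ac metric_sym[OF x])
  qed
  show ?thesis unfolding metric_riemann[OF x]
    using pd_sum_lower[of d e] pd_sum_lower[of e d] pd_commute[OF open_U smooth_metric x, of d e]
      swap[of d f e b] swap[of e f d b]
    by simp
qed

lemma ginv_riemann_trace:
  assumes x: "x \<in> U"
  shows "(\<Sum>b\<in>UNIV. \<Sum>e\<in>UNIV. ginv g x b e * riemann g x a b d e) = (\<Sum>f\<in>UNIV. ginv g x a f * ricci g x f d)"
proof -
  let ?L = "\<lambda>f b e. \<Sum>p\<in>UNIV. g x f p * riemann g x p b d e"
  have "riemann g x a b d e = (\<Sum>f\<in>UNIV. ginv g x a f * ?L f b e)" for b e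
    by (simp only: ginv_metric_contract[OF x])
  then have "(\<Sum>b\<in>UNIV. \<Sum>e\<in>UNIV. ginv g x b e * riemann g x a b d e)
      = (\<Sum>b\<in>UNIV. \<Sum>e\<in>UNIV. \<Sum>f\<in>UNIV. ginv g x b e * ginv g x a f * ?L f b e)"
    by (simp add: sum_distrib_left mult.assoc)
  also have "\<dots> = (\<Sum>b\<in>UNIV. \<Sum>e\<in>UNIV. \<Sum>f\<in>UNIV. - (ginv g x a f * (ginv g x e b * ?L b f e)))"
  proof -
    have "ginv g x b e * ginv g x a f * ?L f b e = - (ginv g x a f * (ginv g x e b * ?L b f e))" for b e f
      using metric_riemann_antisym[OF x, of f b d e] ginv_sym[OF x, of b e] by simp
    then show ?thesis by simp
  qed
  also have "\<dots> = (\<Sum>f\<in>UNIV. \<Sum>e\<in>UNIV. \<Sum>b\<in>UNIV. - (ginv g x a f * (ginv g x e b * ?L b f e)))"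
    by (rule sum_reverse3)
  also have "\<dots> = - (\<Sum>f\<in>UNIV. ginv g x a f * (\<Sum>e\<in>UNIV. \<Sum>b\<in>UNIV. ginv g x e b * ?L b f e))"
    by (simp add: sum_distrib_left sum_negf)
  also have "\<dots> = - (\<Sum>f\<in>UNIV. ginv g x a f * (\<Sum>e\<in>UNIV. riemann g x e f d e))"
    by (simp only: ginv_metric_contract[OF x])
  also have "\<dots> = (\<Sum>f\<in>UNIV. ginv g x a f * ricci g x f d)"
    using riemann_antisym[of g x _ _ d] by (simp add: ricci_eq_riemann_trace[OF x] sum_negf sum_distrib_left)
  finally show ?thesis .
qed

lemma raise_eq_sum: "x \<in> U \<Longrightarrow> raise g V x f = (\<Sum>d\<in>UNIV. V x d * ginv g x d f)"
  unfolding raise_def by (rule sum.cong) (simp_all add: ginv_sym mult.commute)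

lemma ricci_identity_traced:
  assumes V: "\<And>a. smooth_on U (\<lambda>y. V y a)" and x: "x \<in> U"
  shows "(\<Sum>a\<in>UNIV. \<Sum>c\<in>UNIV. ginv g x a c * (cov_d2 g (cov_d g V) x c b a - cov_d2 g (cov_d g V) x b c a))
    = (\<Sum>f\<in>UNIV. raise g V x f * ricci g x f b)"
proof -
  have "(\<Sum>a\<in>UNIV. \<Sum>c\<in>UNIV. ginv g x a c * (cov_d2 g (cov_d g V) x c b a - cov_d2 g (cov_d g V) x b c a))
     = (\<Sum>a\<in>UNIV. \<Sum>c\<in>UNIV. \<Sum>d\<in>UNIV. V x d * (ginv g x a c * riemann g x d a b c))"
    using riemann_antisym[of g x _ _ _ b]
    by (simp add: ricci_identity[OF V x] sum_distrib_left sum_negf mult_ac)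
  also have "\<dots> = (\<Sum>d\<in>UNIV. V x d * (\<Sum>a\<in>UNIV. \<Sum>c\<in>UNIV. ginv g x a c * riemann g x d a b c))"
  proof -
    have "(\<Sum>a\<in>UNIV. \<Sum>c\<in>UNIV. \<Sum>d\<in>UNIV. V x d * (ginv g x a c * riemann g x d a b c))
       = (\<Sum>d\<in>UNIV. \<Sum>a\<in>UNIV. \<Sum>c\<in>UNIV. V x d * (ginv g x a c * riemann g x d a b c))"
      by (subst sum.swap) (rule sum.cong[OF refl sum.swap])
    then show ?thesis by (simp add: sum_distrib_left)
  qed
  also have "\<dots> = (\<Sum>d\<in>UNIV. V x d * (\<Sum>f\<in>UNIV. ginv g x d f * ricci g x f b))"
    by (simp add: ginv_riemann_trace[OF x])
  also have "\<dots> = (\<Sum>f\<in>UNIV. (\<Sum>d\<in>UNIV. V x d * ginv g x d f) * ricci g x f b)"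
    by (rule sum_mult_sum_swap)
  also have "\<dots> = (\<Sum>f\<in>UNIV. raise g V x f * ricci g x f b)"
    by (simp add: raise_eq_sum[OF x])
  finally show ?thesis .
qed

end

definition cov_d_riemann ::
  "(real^'n::finite \<Rightarrow> 'n \<Rightarrow> 'n \<Rightarrow> real) \<Rightarrow> real^'n \<Rightarrow> 'n \<Rightarrow> 'n \<Rightarrow> 'n \<Rightarrow> 'n \<Rightarrow> 'n \<Rightarrow> real"
  where "cov_d_riemann g y e a b c d = pd e (\<lambda>z. riemann g z a b c d) y
     + (\<Sum>f\<in>UNIV. christoffel g y a e f * riemann g y f b c d)
     - (\<Sum>f\<in>UNIV. christoffel g y f e b * riemann g y a f c d)
     - (\<Sum>f\<in>UNIV. christoffel g y f e c * riemann g y a b f d)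
     - (\<Sum>f\<in>UNIV. christoffel g y f e d * riemann g y a b c f)"

text \<open>In coordinates, the covariant derivative of the Riemann tensor expands into the following
  five families of terms; each family cancels in the cyclic sum over (e, c, d), the first one by
  symmetry of second partial derivatives.\<close>

definition bianchi_dd :: "(real^'n::finite \<Rightarrow> 'n \<Rightarrow> 'n \<Rightarrow> real) \<Rightarrow> real^'n \<Rightarrow> 'n \<Rightarrow> 'n \<Rightarrow> 'n \<Rightarrow> 'n \<Rightarrow> 'n \<Rightarrow> real"
  where "bianchi_dd g x a b p q r = pd p (pd q (\<lambda>z. christoffel g z a r b)) x"

definition bianchi_cd :: "(real^'n::finite \<Rightarrow> 'n \<Rightarrow> 'n \<Rightarrow> real) \<Rightarrow> real^'n \<Rightarrow> 'n \<Rightarrow> 'n \<Rightarrow> 'n \<Rightarrow> 'n \<Rightarrow> 'n \<Rightarrow> real"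
  where "bianchi_cd g x a b p q r = (\<Sum>k\<in>UNIV. christoffel g x a q k * pd p (\<lambda>z. christoffel g z k r b) x)"

definition bianchi_dc :: "(real^'n::finite \<Rightarrow> 'n \<Rightarrow> 'n \<Rightarrow> real) \<Rightarrow> real^'n \<Rightarrow> 'n \<Rightarrow> 'n \<Rightarrow> 'n \<Rightarrow> 'n \<Rightarrow> 'n \<Rightarrow> real"
  where "bianchi_dc g x a b p q r = (\<Sum>k\<in>UNIV. pd p (\<lambda>z. christoffel g z a q k) x * christoffel g x k r b)"

definition bianchi_ccc :: "(real^'n::finite \<Rightarrow> 'n \<Rightarrow> 'n \<Rightarrow> real) \<Rightarrow> real^'n \<Rightarrow> 'n \<Rightarrow> 'n \<Rightarrow> 'n \<Rightarrow> 'n \<Rightarrow> 'n \<Rightarrow> real"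
  where "bianchi_ccc g x a b p q r
    = (\<Sum>f\<in>UNIV. \<Sum>k\<in>UNIV. christoffel g x a p f * christoffel g x f q k * christoffel g x k r b)"

definition bianchi_cr :: "(real^'n::finite \<Rightarrow> 'n \<Rightarrow> 'n \<Rightarrow> real) \<Rightarrow> real^'n \<Rightarrow> 'n \<Rightarrow> 'n \<Rightarrow> 'n \<Rightarrow> 'n \<Rightarrow> 'n \<Rightarrow> real"
  where "bianchi_cr g x a b p q r = (\<Sum>f\<in>UNIV. christoffel g x f p q * riemann g x a b f r)"

context riemannian_chart
begin

lemma cov_d_riemann_expand:
  assumes x: "x \<in> U"
  shows "cov_d_riemann g x e a b c d = bianchi_dd g x a b e c d - bianchi_dd g x a b e d c
     + bianchi_dc g x a b e c d - bianchi_dc g x a b e d c - bianchi_dc g x a b c d e + bianchi_dc g x a b d c e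
     + bianchi_cd g x a b e c d - bianchi_cd g x a b e d c + bianchi_cd g x a b c e d - bianchi_cd g x a b d e c
     + bianchi_ccc g x a b e c d - bianchi_ccc g x a b e d c - bianchi_ccc g x a b c d e + bianchi_ccc g x a b d c e
     - bianchi_cr g x a b e c d + bianchi_cr g x a b d e c"
proof -
  have "pd e (\<lambda>z. riemann g z a b c d) x = bianchi_dd g x a b e c d - bianchi_dd g x a b e d c
     + bianchi_dc g x a b e c d + bianchi_cd g x a b e c d - bianchi_dc g x a b e d c - bianchi_cd g x a b e d c"
    unfolding riemann_def bianchi_dd_def bianchi_cd_def bianchi_dc_def using x
    by (simp add: pd_simps sum.distrib sum_subtractf)
  moreover have "(\<Sum>f\<in>UNIV. christoffel g x a e f * riemann g x f b c d)
     = bianchi_cd g x a b c e d - bianchi_cd g x a b d e c + bianchi_ccc g x a b e c d - bianchi_ccc g x a b e d c"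
    unfolding riemann_def bianchi_cd_def bianchi_ccc_def
    by (simp add: sum.distrib sum_subtractf algebra_simps sum_distrib_left)
  moreover have "(\<Sum>f\<in>UNIV. christoffel g x f e b * riemann g x a f c d)
     = bianchi_dc g x a b c d e - bianchi_dc g x a b d c e + bianchi_ccc g x a b c d e - bianchi_ccc g x a b d c e"
  proof -
    have "(\<Sum>f\<in>UNIV. christoffel g x f e b * (\<Sum>k\<in>UNIV. christoffel g x a p k * christoffel g x k q f))
       = bianchi_ccc g x a b p q e" for p q
    proof -
      have "(\<Sum>f\<in>UNIV. christoffel g x f e b * (\<Sum>k\<in>UNIV. christoffel g x a p k * christoffel g x k q f))
          = (\<Sum>k\<in>UNIV. \<Sum>f\<in>UNIV. christoffel g x f e b * christoffel g x a p k * christoffel g x k q f)"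
        by (simp add: sum_distrib_left mult.assoc) (rule sum.swap)
      then show ?thesis unfolding bianchi_ccc_def by (simp add: mult_ac)
    qed
    then show ?thesis
      unfolding riemann_def bianchi_dc_def
      by (simp add: sum.distrib sum_subtractf algebra_simps sum_distrib_left)
  qed
  moreover have "(\<Sum>f\<in>UNIV. christoffel g x f e d * riemann g x a b c f) = - bianchi_cr g x a b d e c"
    unfolding bianchi_cr_def using christoffel_sym[OF x] riemann_antisym[of g x a b c]
    by (simp add: sum_negf)
  moreover have "(\<Sum>f\<in>UNIV. christoffel g x f e c * riemann g x a b f d) = bianchi_cr g x a b e c d"
    unfolding bianchi_cr_def by simp
  ultimately show ?thesis unfolding cov_d_riemann_def by simp
qed

lemma second_bianchi:
  assumes x: "x \<in> U"
  shows "cov_d_riemann g x e a b c d + cov_d_riemann g x c a b d e + cov_d_riemann g x d a b e c = 0"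
proof -
  have "bianchi_dd g x a b p q r = bianchi_dd g x a b q p r" for p q r
    unfolding bianchi_dd_def by (rule pd_commute[OF open_U smooth_christoffel x])
  then show ?thesis unfolding cov_d_riemann_expand[OF x] by simp
qed

end

definition cov_d_mixed ::
  "(real^'n::finite \<Rightarrow> 'n \<Rightarrow> 'n \<Rightarrow> real) \<Rightarrow> (real^'n \<Rightarrow> 'n \<Rightarrow> 'n \<Rightarrow> real) \<Rightarrow> real^'n \<Rightarrow> 'n \<Rightarrow> 'n \<Rightarrow> 'n \<Rightarrow> real"
  where "cov_d_mixed g Q y c a d = pd c (\<lambda>z. Q z a d) y
     + (\<Sum>f\<in>UNIV. christoffel g y a c f * Q y f d) - (\<Sum>f\<in>UNIV. christoffel g y f c d * Q y a f)"

definition div_tensor ::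
  "(real^'n::finite \<Rightarrow> 'n \<Rightarrow> 'n \<Rightarrow> real) \<Rightarrow> (real^'n \<Rightarrow> 'n \<Rightarrow> 'n \<Rightarrow> real) \<Rightarrow> real^'n \<Rightarrow> 'n \<Rightarrow> real"
  where "div_tensor g T y b = (\<Sum>a\<in>UNIV. \<Sum>c\<in>UNIV. ginv g y a c * cov_d2 g T y a c b)"

definition scalar_curvature :: "(real^'n::finite \<Rightarrow> 'n \<Rightarrow> 'n \<Rightarrow> real) \<Rightarrow> real^'n \<Rightarrow> real"
  where "scalar_curvature g y = (\<Sum>a\<in>UNIV. \<Sum>b\<in>UNIV. ginv g y a b * ricci g y a b)"

context riemannian_chart
begin

lemma cov_d_mixed_cong:
  assumes x: "x \<in> U" and "\<And>y a d. y \<in> U \<Longrightarrow> P y a d = Q y a d"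
  shows "cov_d_mixed g P x c a d = cov_d_mixed g Q x c a d"
proof -
  have "pd c (\<lambda>y. P y a d) x = pd c (\<lambda>y. Q y a d) x" by (rule pd_cong_open[OF open_U x]) (simp add: assms)
  then show ?thesis unfolding cov_d_mixed_def using assms by simp
qed

lemma cov_d_mixed_raise:
  assumes T: "\<And>a b. smooth_on U (\<lambda>y. T y a b)" and x: "x \<in> U"
  shows "cov_d_mixed g (\<lambda>y a d. \<Sum>f\<in>UNIV. ginv g y a f * T y f d) x c a d
    = (\<Sum>f\<in>UNIV. ginv g x a f * cov_d2 g T x c f d)"
proof -
  have "pd c (\<lambda>y. \<Sum>f\<in>UNIV. ginv g y a f * T y f d) x
      = (\<Sum>f\<in>UNIV. ginv g x a f * pd c (\<lambda>y. T y f d) x)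
        - (\<Sum>f\<in>UNIV. (\<Sum>l\<in>UNIV. christoffel g x a c l * ginv g x l f) * T x f d)
        - (\<Sum>f\<in>UNIV. (\<Sum>l\<in>UNIV. christoffel g x f c l * ginv g x a l) * T x f d)"
    using T x by (simp add: pd_simps pd_ginv sum.distrib sum_subtractf algebra_simps)
  moreover have "(\<Sum>f\<in>UNIV. christoffel g x a c f * (\<Sum>k\<in>UNIV. ginv g x f k * T x k d))
      = (\<Sum>f\<in>UNIV. (\<Sum>l\<in>UNIV. christoffel g x a c l * ginv g x l f) * T x f d)"
    by (rule sum_mult_sum_swap)
  moreover have "(\<Sum>f\<in>UNIV. (\<Sum>l\<in>UNIV. christoffel g x f c l * ginv g x a l) * T x f d)
      = (\<Sum>f\<in>UNIV. ginv g x a f * (\<Sum>k\<in>UNIV. christoffel g x k c f * T x k d))"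
    by (simp add: sum_distrib_left sum_distrib_right mult_ac) (rule sum.swap)
  moreover have "(\<Sum>f\<in>UNIV. christoffel g x f c d * (\<Sum>k\<in>UNIV. ginv g x a k * T x k f))
      = (\<Sum>f\<in>UNIV. ginv g x a f * (\<Sum>k\<in>UNIV. christoffel g x k c d * T x f k))"
    by (simp add: sum_distrib_left mult_ac) (rule sum.swap)
  ultimately show ?thesis
    unfolding cov_d_mixed_def cov_d2_def by (simp add: right_diff_distrib sum_subtractf)
qed

lemma ginv_trace_cov_d_riemann:
  assumes x: "x \<in> U"
  shows "(\<Sum>b\<in>UNIV. \<Sum>e\<in>UNIV. ginv g x b e * cov_d_riemann g x c a b d e)
    = cov_d_mixed g (\<lambda>y a d. \<Sum>b\<in>UNIV. \<Sum>e\<in>UNIV. ginv g y b e * riemann g y a b d e) x c a d"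
proof -
  have "cov_d_riemann g x c a b d e = cov_d2 g (\<lambda>y b e. riemann g y a b d e) x c b e
      + (\<Sum>f\<in>UNIV. christoffel g x a c f * riemann g x f b d e)
      - (\<Sum>f\<in>UNIV. christoffel g x f c d * riemann g x a b f e)" for b e
    unfolding cov_d_riemann_def cov_d2_def by simp
  then have "(\<Sum>b\<in>UNIV. \<Sum>e\<in>UNIV. ginv g x b e * cov_d_riemann g x c a b d e)
      = (\<Sum>b\<in>UNIV. \<Sum>e\<in>UNIV. ginv g x b e * cov_d2 g (\<lambda>y b e. riemann g y a b d e) x c b e)
        + (\<Sum>b\<in>UNIV. \<Sum>e\<in>UNIV. ginv g x b e * (\<Sum>f\<in>UNIV. christoffel g x a c f * riemann g x f b d e))
        - (\<Sum>b\<in>UNIV. \<Sum>e\<in>UNIV. ginv g x b e * (\<Sum>f\<in>UNIV. christoffel g x f c d * riemann g x a b f e))"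
    by (simp add: distrib_left right_diff_distrib sum.distrib sum_subtractf)
  then show ?thesis
    unfolding cov_d_mixed_def sum_sum_mult_sum_commute
    using pd_trace[of "\<lambda>y b e. riemann g y a b d e" x c] x by simp
qed

lemma riemann_trace_cov_d:
  assumes x: "x \<in> U"
  shows "(\<Sum>a\<in>UNIV. cov_d_riemann g x e a b a d) = cov_d2 g (ricci g) x e b d"
proof -
  have "pd e (\<lambda>z. ricci g z b d) x = pd e (\<lambda>z. \<Sum>a\<in>UNIV. riemann g z a b a d) x"
    by (rule pd_cong_open[OF open_U x]) (simp add: ricci_eq_riemann_trace)
  also have "\<dots> = (\<Sum>a\<in>UNIV. pd e (\<lambda>z. riemann g z a b a d) x)" using x by (simp add: pd_simps)
  finally have "pd e (\<lambda>z. ricci g z b d) x = (\<Sum>a\<in>UNIV. pd e (\<lambda>z. riemann g z a b a d) x)" .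
  moreover have "(\<Sum>a\<in>UNIV. \<Sum>f\<in>UNIV. christoffel g x a e f * riemann g x f b a d)
     = (\<Sum>a\<in>UNIV. \<Sum>f\<in>UNIV. christoffel g x f e a * riemann g x a b f d)"
    by (subst sum.swap) (simp add: christoffel_sym[OF x])
  moreover have "(\<Sum>a\<in>UNIV. \<Sum>f\<in>UNIV. christoffel g x f e b * riemann g x a f a d)
     = (\<Sum>f\<in>UNIV. christoffel g x f e b * ricci g x f d)"
    by (subst sum.swap) (simp add: ricci_eq_riemann_trace[OF x] sum_distrib_left)
  moreover have "(\<Sum>a\<in>UNIV. \<Sum>f\<in>UNIV. christoffel g x f e d * riemann g x a b a f)
     = (\<Sum>f\<in>UNIV. christoffel g x f e d * ricci g x b f)"
    by (subst sum.swap) (simp add: ricci_eq_riemann_trace[OF x] sum_distrib_left)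
  ultimately show ?thesis unfolding cov_d_riemann_def cov_d2_def
    by (simp only: sum.distrib sum_subtractf)
qed

lemma cov_d_riemann_antisym: "x \<in> U \<Longrightarrow> cov_d_riemann g x d a b e c = - cov_d_riemann g x d a b c e"
proof -
  assume x: "x \<in> U"
  have "pd d (\<lambda>z. riemann g z a b e c) x = - pd d (\<lambda>z. riemann g z a b c e) x"
    using riemann_antisym[of g _ a b e c] x by (simp add: pd_minus_smooth[OF open_U])
  then show ?thesis
    unfolding cov_d_riemann_def
    using riemann_antisym[of g x _ _ e c] riemann_antisym[of g x a b _ c] riemann_antisym[of g x a b e _]
    by (simp add: sum_negf)
qed

theorem contracted_bianchi:
  assumes x: "x \<in> U"
  shows "2 * div_tensor g (ricci g) x d = pd d (scalar_curvature g) x"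
proof -
  let ?R = "cov_d2 g (ricci g) x"
  have "?R e b d + (\<Sum>a\<in>UNIV. cov_d_riemann g x a a b d e) - ?R d b e = 0" for b e
  proof -
    have "(\<Sum>a\<in>UNIV. cov_d_riemann g x e a b a d) + (\<Sum>a\<in>UNIV. cov_d_riemann g x a a b d e)
        + (\<Sum>a\<in>UNIV. cov_d_riemann g x d a b e a) = 0"
      by (simp only: sum.distrib[symmetric] second_bianchi[OF x] sum.neutral_const)
    moreover have "(\<Sum>a\<in>UNIV. cov_d_riemann g x d a b e a) = - ?R d b e"
      by (simp add: cov_d_riemann_antisym[OF x, of d _ b e] sum_negf riemann_trace_cov_d[OF x])
    ultimately show ?thesis by (simp add: riemann_trace_cov_d[OF x])
  qed
  then have "(\<Sum>b\<in>UNIV. \<Sum>e\<in>UNIV. ginv g x b e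
      * (?R e b d + (\<Sum>a\<in>UNIV. cov_d_riemann g x a a b d e) - ?R d b e)) = 0"
    by simp
  then have "(\<Sum>b\<in>UNIV. \<Sum>e\<in>UNIV. ginv g x b e * ?R e b d)
      + (\<Sum>b\<in>UNIV. \<Sum>e\<in>UNIV. ginv g x b e * (\<Sum>a\<in>UNIV. cov_d_riemann g x a a b d e))
      - (\<Sum>b\<in>UNIV. \<Sum>e\<in>UNIV. ginv g x b e * ?R d b e) = 0"
    by (simp only: distrib_left right_diff_distrib sum.distrib sum_subtractf)
  moreover have "(\<Sum>b\<in>UNIV. \<Sum>e\<in>UNIV. ginv g x b e * ?R e b d) = div_tensor g (ricci g) x d"
    unfolding div_tensor_def by (subst sum.swap) (simp add: ginv_sym[OF x])
  moreover have "(\<Sum>b\<in>UNIV. \<Sum>e\<in>UNIV. ginv g x b e * (\<Sum>a\<in>UNIV. cov_d_riemann g x a a b d e))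
      = div_tensor g (ricci g) x d"
  proof -
    have "(\<Sum>b\<in>UNIV. \<Sum>e\<in>UNIV. ginv g x b e * (\<Sum>a\<in>UNIV. cov_d_riemann g x a a b d e))
        = (\<Sum>a\<in>UNIV. cov_d_mixed g (\<lambda>y a d. \<Sum>b\<in>UNIV. \<Sum>e\<in>UNIV. ginv g y b e * riemann g y a b d e) x a a d)"
      by (simp add: sum_distrib_left ginv_trace_cov_d_riemann[OF x, symmetric]) (rule sum_rotate3)
    also have "\<dots> = (\<Sum>a\<in>UNIV. cov_d_mixed g (\<lambda>y a d. \<Sum>f\<in>UNIV. ginv g y a f * ricci g y f d) x a a d)"
      by (rule sum.cong[OF refl cov_d_mixed_cong[OF x]]) (rule ginv_riemann_trace)
    finally show ?thesis unfolding div_tensor_def by (simp add: cov_d_mixed_raise[OF _ x])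
  qed
  moreover have "(\<Sum>b\<in>UNIV. \<Sum>e\<in>UNIV. ginv g x b e * ?R d b e) = pd d (scalar_curvature g) x"
    unfolding scalar_curvature_def by (rule pd_trace[OF smooth_ricci x, symmetric])
  ultimately show ?thesis by simp
qed

lemma ginv_sum_swap: "x \<in> U \<Longrightarrow> (\<Sum>a\<in>UNIV. \<Sum>c\<in>UNIV. ginv g x a c * F c a) = (\<Sum>a\<in>UNIV. \<Sum>c\<in>UNIV. ginv g x a c * F a c)"
  by (subst sum.swap) (simp add: ginv_sym)

lemma ginv_ginv_sum_reorder:
  assumes x: "x \<in> U"
  shows "(\<Sum>i\<in>UNIV. \<Sum>j\<in>UNIV. ginv g x i j * (\<Sum>b\<in>UNIV. (\<Sum>e\<in>UNIV. ginv g x b e * A i e) * B j b))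
    = (\<Sum>a\<in>UNIV. \<Sum>b\<in>UNIV. \<Sum>c\<in>UNIV. \<Sum>d\<in>UNIV. B a b * ginv g x a c * ginv g x b d * A c d)"
proof -
  have "(\<Sum>i\<in>UNIV. \<Sum>j\<in>UNIV. ginv g x i j * (\<Sum>b\<in>UNIV. (\<Sum>e\<in>UNIV. ginv g x b e * A i e) * B j b))
      = (\<Sum>j\<in>UNIV. \<Sum>b\<in>UNIV. \<Sum>i\<in>UNIV. \<Sum>e\<in>UNIV. ginv g x i j * (ginv g x b e * A i e * B j b))"
    by (simp only: sum_distrib_left sum_distrib_right) (rule sum_rotate3[symmetric])
  then show ?thesis by (simp add: ginv_sym[OF x] mult_ac)
qed

lemma raise_lower: "x \<in> U \<Longrightarrow> (\<Sum>f\<in>UNIV. raise g V x f * g x f b) = V x b"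
  by (simp add: raise_eq_sum sum_mult_sum_swap[symmetric] ginv_metric if_distrib cong: if_cong)

lemma divg_eq: "divg g V = (\<lambda>y. \<Sum>a\<in>UNIV. \<Sum>c\<in>UNIV. ginv g y a c * cov_d g V y a c)"
  by (simp add: fun_eq_iff divg_def)

lemma div_tensor_transpose_cov_d:
  assumes V: "\<And>a. smooth_on U (\<lambda>y. V y a)" and x: "x \<in> U"
  shows "div_tensor g (\<lambda>y a b. cov_d g V y b a) x b
    = pd b (divg g V) x + (\<Sum>f\<in>UNIV. raise g V x f * ricci g x f b)"
proof -
  let ?A = "cov_d2 g (cov_d g V) x"
  have "div_tensor g (\<lambda>y a b. cov_d g V y b a) x b = (\<Sum>a\<in>UNIV. \<Sum>c\<in>UNIV. ginv g x a c * ?A c b a)"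
    unfolding div_tensor_def cov_d2_transpose[of "cov_d g V"] by (rule ginv_sum_swap[OF x, symmetric])
  moreover have "pd b (divg g V) x = (\<Sum>a\<in>UNIV. \<Sum>c\<in>UNIV. ginv g x a c * ?A b c a)"
    unfolding divg_eq pd_trace[OF smooth_cov_d[OF V] x] by (rule ginv_sum_swap[OF x, symmetric])
  moreover have "(\<Sum>a\<in>UNIV. \<Sum>c\<in>UNIV. ginv g x a c * (?A c b a - ?A b c a))
      = (\<Sum>f\<in>UNIV. raise g V x f * ricci g x f b)"
    by (rule ricci_identity_traced[OF V x])
  ultimately show ?thesis by (simp add: right_diff_distrib sum_subtractf)
qed

lemma div_tensor_sym_cov_d:
  assumes V: "\<And>a. smooth_on U (\<lambda>y. V y a)" and x: "x \<in> U"
  shows "2 * div_tensor g (sym_cov_d g V) x b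
    = div_tensor g (cov_d g V) x b + pd b (divg g V) x + (\<Sum>f\<in>UNIV. raise g V x f * ricci g x f b)"
proof -
  have "2 * div_tensor g (sym_cov_d g V) x b
      = div_tensor g (cov_d g V) x b + div_tensor g (\<lambda>y a b. cov_d g V y b a) x b"
    unfolding div_tensor_def cov_d2_sym_cov_d[OF V x] cov_d2_transpose[of "cov_d g V"]
    by (simp add: sum_distrib_left sum.distrib distrib_left add_divide_distrib)
  then show ?thesis by (simp add: div_tensor_transpose_cov_d[OF V x])
qed

end

section \<open>The near-horizon equation\<close>

locale near_horizon = riemannian_chart U g for U :: "(real^'n::finite) set" and g +
  fixes X :: "real^'n \<Rightarrow> 'n \<Rightarrow> real" and Gam :: "real^'n \<Rightarrow> real" and lam :: real
    and K :: "real^'n \<Rightarrow> 'n \<Rightarrow> real"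
  assumes smooth_X: "\<forall>a. smooth_on U (\<lambda>x. X x a)"
    and smooth_Gam: "smooth_on U Gam"
    and Gam_pos: "\<forall>x\<in>U. Gam x > 0"
    and K_def: "\<forall>x a. K x a = Gam x * X x a + grad Gam x a"
    and ricci_eq: "\<forall>x\<in>U. \<forall>a b. ricci g x a b = (1/2) * X x a * X x b - sym_cov_d g X x a b + lam * g x a b"
begin

abbreviation hess :: "real^'n \<Rightarrow> 'n \<Rightarrow> 'n \<Rightarrow> real" where "hess \<equiv> cov_d g (grad Gam)"

lemma smooth_X_component[simp]: "smooth_on U (\<lambda>y. X y a)"
  using smooth_X by blast

lemmas [simp] = smooth_Gam

lemma K_eq: "K = (\<lambda>y a. Gam y * X y a + grad Gam y a)"
  using K_def by (simp add: fun_eq_iff)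

lemma smooth_K[simp]: "smooth_on U (\<lambda>y. K y a)"
  unfolding K_eq by simp

lemma raise_K: "raise g K x f = Gam x * raise g X x f + raise g (grad Gam) x f"
  unfolding raise_def K_eq by (simp add: distrib_left sum.distrib sum_distrib_left mult_ac)

lemma cov_d_K:
  assumes x: "x \<in> U"
  shows "cov_d g K x a b = pd a Gam x * X x b + Gam x * cov_d g X x a b + hess x a b"
proof -
  have "cov_d g K x a b = cov_d g (\<lambda>y a. Gam y * X y a) x a b + hess x a b"
    unfolding K_eq by (rule cov_d_add) (simp_all add: x)
  also have "cov_d g (\<lambda>y a. Gam y * X y a) x a b = pd a Gam x * X x b + Gam x * cov_d g X x a b"
    by (rule cov_d_scale) (simp_all add: x)
  finally show ?thesis .
qed

lemma divg_K:
  assumes x: "x \<in> U"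
  shows "divg g K x = (\<Sum>f\<in>UNIV. raise g (grad Gam) x f * X x f) + Gam x * divg g X x + laplacian g Gam x"
proof -
  have "(\<Sum>a\<in>UNIV. \<Sum>b\<in>UNIV. ginv g x a b * (pd a Gam x * X x b))
      = (\<Sum>f\<in>UNIV. raise g (grad Gam) x f * X x f)"
    unfolding raise_def grad_def
    by (subst sum.swap) (simp add: sum_distrib_left sum_distrib_right ginv_sym[OF x] mult_ac)
  then show ?thesis
    unfolding divg_def[of g K] laplacian_def divg_def[of g "grad Gam"] divg_def[of g X] cov_d_K[OF x]
    by (simp add: distrib_left sum.distrib sum_distrib_left mult_ac)
qed

lemma cov_d2_cov_d_K:
  assumes x: "x \<in> U"
  shows "cov_d2 g (cov_d g K) x c a b = hess x c a * X x b + pd a Gam x * cov_d g X x c b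
    + pd c Gam x * cov_d g X x a b + Gam x * cov_d2 g (cov_d g X) x c a b + cov_d2 g hess x c a b"
proof -
  have "cov_d2 g (cov_d g K) x c a b
      = cov_d2 g (\<lambda>y a b. (grad Gam y a * X y b + Gam y * cov_d g X y a b) + hess y a b) x c a b"
    by (rule cov_d2_cong[OF x]) (simp add: cov_d_K grad_def)
  also have "\<dots> = cov_d2 g (\<lambda>y a b. grad Gam y a * X y b) x c a b
      + cov_d2 g (\<lambda>y a b. Gam y * cov_d g X y a b) x c a b + cov_d2 g hess x c a b"
    using x by (simp add: cov_d2_add)
  also have "cov_d2 g (\<lambda>y a b. grad Gam y a * X y b) x c a b = hess x c a * X x b + grad Gam x a * cov_d g X x c b"
    using x by (simp add: cov_d2_tensor)
  also have "cov_d2 g (\<lambda>y a b. Gam y * cov_d g X y a b) x c a b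
      = pd c Gam x * cov_d g X x a b + Gam x * cov_d2 g (cov_d g X) x c a b"
    using x by (simp add: cov_d2_scale)
  finally show ?thesis unfolding grad_def[of Gam x a] by simp
qed

lemma hess_sym: "y \<in> U \<Longrightarrow> hess y a b = hess y b a"
  unfolding cov_d_def grad_def using pd_commute[OF open_U smooth_Gam] christoffel_sym by simp

lemma cov_d2_hess_sym: "x \<in> U \<Longrightarrow> cov_d2 g hess x c a b = cov_d2 g hess x c b a"
  using cov_d2_cong[of x "\<lambda>y a b. hess y b a" hess] cov_d2_transpose[of hess] hess_sym by simp

lemma cov_d2_ricci:
  assumes x: "x \<in> U"
  shows "cov_d2 g (ricci g) x c a b = (cov_d g X x c a * X x b + X x a * cov_d g X x c b) / 2
    - (cov_d2 g (cov_d g X) x c a b + cov_d2 g (cov_d g X) x c b a) / 2"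
proof -
  have "cov_d2 g (ricci g) x c a b = cov_d2 g (\<lambda>y a b. ((\<lambda>y. 1/2) y * (X y a * X y b)
      - sym_cov_d g X y a b) + (\<lambda>y. lam) y * g y a b) x c a b"
    by (rule cov_d2_cong[OF x]) (simp add: ricci_eq)
  also have "\<dots> = cov_d2 g (\<lambda>y a b. (\<lambda>y. 1/2) y * (X y a * X y b) - sym_cov_d g X y a b) x c a b
      + cov_d2 g (\<lambda>y a b. (\<lambda>y. lam) y * g y a b) x c a b"
    by (rule cov_d2_add) (simp_all add: x)
  also have "cov_d2 g (\<lambda>y a b. (\<lambda>y. lam) y * g y a b) x c a b = 0"
    using cov_d2_scale[of "\<lambda>y. lam" g x c a b] x by (simp add: pd_const cov_d2_metric)
  also have "cov_d2 g (\<lambda>y a b. (\<lambda>y. 1/2) y * (X y a * X y b) - sym_cov_d g X y a b) x c a b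
      = cov_d2 g (\<lambda>y a b. (\<lambda>y. 1/2) y * (X y a * X y b)) x c a b - cov_d2 g (sym_cov_d g X) x c a b"
    by (rule cov_d2_diff) (simp_all add: x)
  also have "cov_d2 g (\<lambda>y a b. (\<lambda>y. 1/2) y * (X y a * X y b)) x c a b
      = 1/2 * cov_d2 g (\<lambda>y a b. X y a * X y b) x c a b"
    using cov_d2_scale[of "\<lambda>y. 1/2" "\<lambda>y a b. X y a * X y b" x c a b] x by (simp add: pd_const)
  finally show ?thesis
    using x by (simp add: cov_d2_tensor cov_d2_sym_cov_d)
qed

lemma ricci_raise:
  assumes x: "x \<in> U"
  shows "(\<Sum>f\<in>UNIV. raise g V x f * ricci g x f b)
    = (\<Sum>f\<in>UNIV. raise g V x f * X x f) * X x b / 2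
      - (\<Sum>f\<in>UNIV. raise g V x f * cov_d g X x f b) / 2 - (\<Sum>f\<in>UNIV. raise g V x f * cov_d g X x b f) / 2
      + lam * V x b"
proof -
  have "(\<Sum>f\<in>UNIV. raise g V x f * ricci g x f b)
      = (\<Sum>f\<in>UNIV. raise g V x f * X x f * X x b / 2
          - raise g V x f * cov_d g X x f b / 2 - raise g V x f * cov_d g X x b f / 2
          + lam * (raise g V x f * g x f b))"
    by (intro sum.cong refl) (simp add: ricci_eq[rule_format, OF x] sym_cov_d_def field_simps)
  also have "\<dots> = (\<Sum>f\<in>UNIV. raise g V x f * X x f) * X x b / 2
      - (\<Sum>f\<in>UNIV. raise g V x f * cov_d g X x f b) / 2 - (\<Sum>f\<in>UNIV. raise g V x f * cov_d g X x b f) / 2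
      + lam * (\<Sum>f\<in>UNIV. raise g V x f * g x f b)"
    by (simp only: sum.distrib sum_subtractf sum_distrib_left sum_distrib_right sum_divide_distrib)
  finally show ?thesis by (simp only: raise_lower[OF x])
qed

lemma sum_raise_K:
  "(\<Sum>f\<in>UNIV. raise g K x f * W f)
    = Gam x * (\<Sum>f\<in>UNIV. raise g X x f * W f) + (\<Sum>f\<in>UNIV. raise g (grad Gam) x f * W f)"
  by (simp add: raise_K distrib_right sum.distrib sum_distrib_left mult.assoc)

lemma laplacian_eq: "laplacian g Gam = divg g (grad Gam)"
  by (simp add: fun_eq_iff laplacian_def)

lemma div_tensor_hess:
  assumes x: "x \<in> U"
  shows "div_tensor g hess x b
    = pd b (laplacian g Gam) x + (\<Sum>f\<in>UNIV. raise g (grad Gam) x f * ricci g x f b)"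
proof -
  have "div_tensor g hess x b = div_tensor g (\<lambda>y a b. hess y b a) x b"
    unfolding div_tensor_def cov_d2_transpose[of hess] using cov_d2_hess_sym[OF x] by simp
  then show ?thesis
    unfolding laplacian_eq by (simp add: div_tensor_transpose_cov_d[OF _ x])
qed

lemma div_tensor_cov_d_K:
  assumes x: "x \<in> U"
  shows "div_tensor g (cov_d g K) x b = laplacian g Gam x * X x b
    + 2 * (\<Sum>f\<in>UNIV. raise g (grad Gam) x f * cov_d g X x f b)
    + Gam x * div_tensor g (cov_d g X) x b + div_tensor g hess x b"
proof -
  have "(\<Sum>a\<in>UNIV. \<Sum>c\<in>UNIV. ginv g x a c * (pd c Gam x * cov_d g X x a b))
      = (\<Sum>f\<in>UNIV. raise g (grad Gam) x f * cov_d g X x f b)"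
    unfolding raise_def grad_def by (simp add: sum_distrib_left sum_distrib_right mult_ac)
  moreover have "(\<Sum>a\<in>UNIV. \<Sum>c\<in>UNIV. ginv g x a c * (pd a Gam x * cov_d g X x c b))
      = (\<Sum>f\<in>UNIV. raise g (grad Gam) x f * cov_d g X x f b)"
    using ginv_sum_swap[OF x, of "\<lambda>c a. pd a Gam x * cov_d g X x c b"] calculation by simp
  moreover have "(\<Sum>a\<in>UNIV. \<Sum>c\<in>UNIV. ginv g x a c * (hess x a c * X x b)) = laplacian g Gam x * X x b"
    unfolding laplacian_def divg_def by (simp add: sum_distrib_left sum_distrib_right mult_ac)
  ultimately show ?thesis
    unfolding div_tensor_def cov_d2_cov_d_K[OF x]
    by (simp add: distrib_left sum.distrib sum_distrib_left[symmetric] mult.left_commute[of "ginv g x _ _"])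
qed

lemma div_tensor_ricci:
  assumes x: "x \<in> U"
  shows "div_tensor g (ricci g) x b = (divg g X x * X x b + (\<Sum>f\<in>UNIV. raise g X x f * cov_d g X x f b)) / 2
    - (div_tensor g (cov_d g X) x b + pd b (divg g X) x + (\<Sum>f\<in>UNIV. raise g X x f * ricci g x f b)) / 2"
proof -
  have "div_tensor g (\<lambda>y a b. cov_d g X y b a) x b = (\<Sum>a\<in>UNIV. \<Sum>c\<in>UNIV. ginv g x a c * cov_d2 g (cov_d g X) x a b c)"
    unfolding div_tensor_def cov_d2_transpose[of "cov_d g X"] ..
  moreover have "(\<Sum>a\<in>UNIV. \<Sum>c\<in>UNIV. ginv g x a c * (cov_d g X x a c * X x b)) = divg g X x * X x b"
    unfolding divg_def by (simp add: sum_distrib_left sum_distrib_right mult_ac)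
  moreover have "(\<Sum>a\<in>UNIV. \<Sum>c\<in>UNIV. ginv g x a c * (X x c * cov_d g X x a b))
      = (\<Sum>f\<in>UNIV. raise g X x f * cov_d g X x f b)"
    unfolding raise_def by (simp add: sum_distrib_left sum_distrib_right mult_ac)
  ultimately show ?thesis
    using div_tensor_transpose_cov_d[OF _ x, of X b]
    unfolding div_tensor_def cov_d2_ricci[OF x]
    by (simp add: sum_divide_distrib[symmetric] right_diff_distrib distrib_left sum.distrib sum_subtractf
        diff_divide_distrib add_divide_distrib)
qed

lemma pd_scalar_curvature:
  assumes x: "x \<in> U"
  shows "pd b (scalar_curvature g) x = (\<Sum>f\<in>UNIV. raise g X x f * cov_d g X x b f) - pd b (divg g X) x"
proof -
  have tr: "pd b (divg g X) x = (\<Sum>a\<in>UNIV. \<Sum>c\<in>UNIV. ginv g x a c * cov_d2 g (cov_d g X) x b a c)"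
    unfolding divg_eq by (rule pd_trace[OF smooth_cov_d x]) simp
  have "(\<Sum>a\<in>UNIV. \<Sum>c\<in>UNIV. ginv g x a c * (cov_d g X x b a * X x c))
      = (\<Sum>f\<in>UNIV. raise g X x f * cov_d g X x b f)"
    unfolding raise_def by (simp add: sum_distrib_left sum_distrib_right mult_ac)
  moreover have "(\<Sum>a\<in>UNIV. \<Sum>c\<in>UNIV. ginv g x a c * (X x a * cov_d g X x b c))
      = (\<Sum>f\<in>UNIV. raise g X x f * cov_d g X x b f)"
    using ginv_sum_swap[OF x, of "\<lambda>c a. X x a * cov_d g X x b c"] calculation by (simp add: mult.commute)
  moreover have "(\<Sum>a\<in>UNIV. \<Sum>c\<in>UNIV. ginv g x a c * cov_d2 g (cov_d g X) x b c a) = pd b (divg g X) x"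
    unfolding tr by (rule ginv_sum_swap[OF x])
  ultimately show ?thesis
    unfolding scalar_curvature_def pd_trace[OF smooth_ricci x] cov_d2_ricci[OF x] tr
    by (simp add: right_diff_distrib distrib_left sum.distrib sum_subtractf diff_divide_distrib
        add_divide_distrib sum_divide_distrib[symmetric])
qed

lemma div_tensor_cov_d_X:
  assumes x: "x \<in> U"
  shows "div_tensor g (cov_d g X) x b = divg g X x * X x b
    + (\<Sum>f\<in>UNIV. raise g X x f * cov_d g X x f b) - (\<Sum>f\<in>UNIV. raise g X x f * cov_d g X x b f)
    - (\<Sum>f\<in>UNIV. raise g X x f * ricci g x f b)"
  using contracted_bianchi[OF x, of b] div_tensor_ricci[OF x, of b] pd_scalar_curvature[OF x, of b]
  by (simp add: field_simps)

lemma div_tensor_sym_cov_d_K: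
  assumes x: "x \<in> U"
  shows "2 * div_tensor g (sym_cov_d g K) x b
    = pd b (laplacian g Gam) x + pd b (divg g K) x + 2 * lam * pd b Gam x + X x b * divg g K x
      + (\<Sum>f\<in>UNIV. raise g K x f * cov_d g X x f b) - (\<Sum>f\<in>UNIV. raise g K x f * cov_d g X x b f)"
proof -
  have "2 * div_tensor g (sym_cov_d g K) x b
      = div_tensor g (cov_d g K) x b + pd b (divg g K) x + (\<Sum>f\<in>UNIV. raise g K x f * ricci g x f b)"
    by (rule div_tensor_sym_cov_d[OF smooth_K x])
  also have "\<dots> = pd b (laplacian g Gam) x + pd b (divg g K) x + 2 * lam * pd b Gam x + X x b * divg g K x
      + (\<Sum>f\<in>UNIV. raise g K x f * cov_d g X x f b) - (\<Sum>f\<in>UNIV. raise g K x f * cov_d g X x b f)"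
    unfolding div_tensor_cov_d_K[OF x] div_tensor_cov_d_X[OF x] div_tensor_hess[OF x] sum_raise_K
      ricci_raise[OF x, of "grad Gam" b] divg_K[OF x] grad_def
    by (simp add: algebra_simps)
  finally show ?thesis .
qed

lemma divg_expand:
  assumes x: "x \<in> U"
  shows "divg g (\<lambda>y a. (\<Sum>b\<in>UNIV. raise g K y b * sym_cov_d g K y a b)
                    - (1/2) * K y a * laplacian g Gam y
                    - (1/2) * K y a * divg g K y
                    - lam * Gam y * K y a) x
    = (\<Sum>a\<in>UNIV. \<Sum>b\<in>UNIV. \<Sum>c\<in>UNIV. \<Sum>d\<in>UNIV. sym_cov_d g K x a b * ginv g x a c * ginv g x b d * cov_d g K x c d)
      + (\<Sum>b\<in>UNIV. raise g K x b * div_tensor g (sym_cov_d g K) x b)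
      - (\<Sum>a\<in>UNIV. raise g K x a * (1/2 * pd a (laplacian g Gam) x + 1/2 * pd a (divg g K) x + lam * pd a Gam x))
      - (1/2 * laplacian g Gam x + 1/2 * divg g K x + lam * Gam x) * divg g K x"
proof -
  define F where "F y = 1/2 * laplacian g Gam y + 1/2 * divg g K y + lam * Gam y" for y
  define T where "T i j = (\<Sum>b\<in>UNIV. (\<Sum>e\<in>UNIV. ginv g x b e * cov_d g K x i e) * sym_cov_d g K x j b)" for i j
  have smooth_F: "smooth_on U F" unfolding F_def by simp
  have "(\<lambda>y a. (\<Sum>b\<in>UNIV. raise g K y b * sym_cov_d g K y a b) - (1/2) * K y a * laplacian g Gam y
      - (1/2) * K y a * divg g K y - lam * Gam y * K y a)
      = (\<lambda>y a. (\<Sum>b\<in>UNIV. raise g K y b * sym_cov_d g K y a b) - F y * K y a)"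
    unfolding F_def by (simp add: fun_eq_iff algebra_simps)
  moreover have "cov_d g (\<lambda>y a. (\<Sum>b\<in>UNIV. raise g K y b * sym_cov_d g K y a b) - F y * K y a) x i j
      = T i j + (\<Sum>b\<in>UNIV. raise g K x b * cov_d2 g (sym_cov_d g K) x i j b)
        - (pd i F x * K x j + F x * cov_d g K x i j)" for i j
    unfolding T_def using x smooth_F by (simp add: cov_d_diff cov_d_contract cov_d_scale)
  moreover have "(\<Sum>i\<in>UNIV. \<Sum>j\<in>UNIV. ginv g x i j * (A i j + B i j - (C i j + c * D i j)))
      = (\<Sum>i\<in>UNIV. \<Sum>j\<in>UNIV. ginv g x i j * A i j) + (\<Sum>i\<in>UNIV. \<Sum>j\<in>UNIV. ginv g x i j * B i j)
        - (\<Sum>i\<in>UNIV. \<Sum>j\<in>UNIV. ginv g x i j * C i j) - c * (\<Sum>i\<in>UNIV. \<Sum>j\<in>UNIV. ginv g x i j * D i j)"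
    for A B C D and c :: real
    by (simp add: distrib_left right_diff_distrib sum.distrib sum_subtractf sum_distrib_left mult_ac)
  moreover have "(\<Sum>i\<in>UNIV. \<Sum>j\<in>UNIV. ginv g x i j * T i j)
      = (\<Sum>a\<in>UNIV. \<Sum>b\<in>UNIV. \<Sum>c\<in>UNIV. \<Sum>d\<in>UNIV.
          sym_cov_d g K x a b * ginv g x a c * ginv g x b d * cov_d g K x c d)"
    unfolding T_def by (rule ginv_ginv_sum_reorder[OF x])
  moreover have "(\<Sum>i\<in>UNIV. \<Sum>j\<in>UNIV. ginv g x i j * (\<Sum>b\<in>UNIV. raise g K x b * cov_d2 g (sym_cov_d g K) x i j b))
      = (\<Sum>b\<in>UNIV. raise g K x b * div_tensor g (sym_cov_d g K) x b)"
    unfolding div_tensor_def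
    by (simp only: sum_distrib_left) (rule trans[OF sum_rotate3], simp only: mult_ac)
  moreover have "(\<Sum>i\<in>UNIV. \<Sum>j\<in>UNIV. ginv g x i j * (pd i F x * K x j)) = (\<Sum>a\<in>UNIV. raise g K x a * pd a F x)"
    unfolding raise_def by (simp add: sum_distrib_left sum_distrib_right mult_ac)
  moreover have "pd a F x = 1/2 * pd a (laplacian g Gam) x + 1/2 * pd a (divg g K) x + lam * pd a Gam x" for a
    unfolding F_def using x by (simp add: pd_simps)
  ultimately show ?thesis
    unfolding divg_def[of g _ x] by (simp only: F_def divg_def[of g K x, symmetric])
qed

lemma K_norm:
  assumes x: "x \<in> U"
  shows "(\<Sum>a\<in>UNIV. \<Sum>b\<in>UNIV. ginv g x a b * K x a * K x b)
    = Gam x * (\<Sum>c\<in>UNIV. raise g K x c * X x c) + (\<Sum>c\<in>UNIV. raise g K x c * grad Gam x c)"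
proof -
  have "(\<Sum>a\<in>UNIV. \<Sum>b\<in>UNIV. ginv g x a b * K x a * K x b) = (\<Sum>c\<in>UNIV. raise g K x c * K x c)"
    unfolding raise_def by (simp add: sum_distrib_left sum_distrib_right mult_ac)
  then show ?thesis by (simp add: K_def distrib_left sum.distrib sum_distrib_left mult_ac)
qed

lemma sum_raise_K_div_tensor_sym_cov_d:
  assumes x: "x \<in> U"
  shows "(\<Sum>b\<in>UNIV. raise g K x b * div_tensor g (sym_cov_d g K) x b)
    = (\<Sum>a\<in>UNIV. raise g K x a * (1/2 * pd a (laplacian g Gam) x + 1/2 * pd a (divg g K) x + lam * pd a Gam x))
      + divg g K x * (\<Sum>b\<in>UNIV. raise g K x b * X x b) / 2"
proof -
  let ?k = "raise g K x"
  have "(\<Sum>b\<in>UNIV. ?k b * div_tensor g (sym_cov_d g K) x b)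
      = (\<Sum>b\<in>UNIV. ?k b * (1/2 * pd b (laplacian g Gam) x + 1/2 * pd b (divg g K) x + lam * pd b Gam x)
          + divg g K x * (?k b * X x b) / 2
          + ?k b * (\<Sum>f\<in>UNIV. ?k f * cov_d g X x f b) / 2 - ?k b * (\<Sum>f\<in>UNIV. ?k f * cov_d g X x b f) / 2)"
  proof (intro sum.cong refl)
    fix b
    have D: "div_tensor g (sym_cov_d g K) x b = (pd b (laplacian g Gam) x + pd b (divg g K) x
        + 2 * lam * pd b Gam x + X x b * divg g K x
        + (\<Sum>f\<in>UNIV. ?k f * cov_d g X x f b) - (\<Sum>f\<in>UNIV. ?k f * cov_d g X x b f)) / 2"
      using div_tensor_sym_cov_d_K[OF x, of b] by simp
    show "?k b * div_tensor g (sym_cov_d g K) x b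
        = ?k b * (1/2 * pd b (laplacian g Gam) x + 1/2 * pd b (divg g K) x + lam * pd b Gam x)
          + divg g K x * (?k b * X x b) / 2
          + ?k b * (\<Sum>f\<in>UNIV. ?k f * cov_d g X x f b) / 2 - ?k b * (\<Sum>f\<in>UNIV. ?k f * cov_d g X x b f) / 2"
      unfolding D by (simp add: field_simps)
  qed
  also have "\<dots> = (\<Sum>a\<in>UNIV. ?k a * (1/2 * pd a (laplacian g Gam) x + 1/2 * pd a (divg g K) x + lam * pd a Gam x))
      + divg g K x * (\<Sum>b\<in>UNIV. ?k b * X x b) / 2
      + (\<Sum>b\<in>UNIV. ?k b * (\<Sum>f\<in>UNIV. ?k f * cov_d g X x f b)) / 2
      - (\<Sum>b\<in>UNIV. ?k b * (\<Sum>f\<in>UNIV. ?k f * cov_d g X x b f)) / 2"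
    by (simp only: sum.distrib sum_subtractf sum_divide_distrib sum_distrib_left)
  finally show ?thesis
    unfolding sum_quadratic_form_transpose[where v = "raise g K x" and T = "\<lambda>f b. cov_d g X x f b"] by simp
qed

theorem divergence_identity:
  assumes x: "x \<in> U"
  shows "(\<Sum>a\<in>UNIV. \<Sum>b\<in>UNIV. \<Sum>c\<in>UNIV. \<Sum>d\<in>UNIV. sym_cov_d g K x a b * ginv g x a c * ginv g x b d * cov_d g K x c d)
    = divg g (\<lambda>y a. (\<Sum>b\<in>UNIV. raise g K y b * sym_cov_d g K y a b)
                    - (1/2) * K y a * laplacian g Gam y
                    - (1/2) * K y a * divg g K y
                    - lam * Gam y * K y a) x
      + divg g K x *
        ( - (\<Sum>a\<in>UNIV. \<Sum>b\<in>UNIV. ginv g x a b * K x a * K x b) / (2 * Gam x)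
          + (1/2) * laplacian g Gam x
          + (1/2) * divg g K x
          + (1 / (2 * Gam x)) * (\<Sum>c\<in>UNIV. raise g K x c * grad Gam x c)
          + lam * Gam x)"
proof -
  have "Gam x \<noteq> 0" using Gam_pos x by force
  then show ?thesis
    unfolding divg_expand[OF x] sum_raise_K_div_tensor_sym_cov_d[OF x] K_norm[OF x]
    by (simp add: field_simps)
qed

end

theorem mainTheorem2:
  fixes U :: "(real^'n) set"
    and g :: "real^'n \<Rightarrow> 'n \<Rightarrow> 'n \<Rightarrow> real"
    and X :: "real^'n \<Rightarrow> 'n \<Rightarrow> real"
    and Gam :: "real^'n \<Rightarrow> real"
    and lam :: real
    and K :: "real^'n \<Rightarrow> 'n \<Rightarrow> real"
  assumes metric: "riemannian_metric U g"
    and X_smooth: "\<forall>a. smooth_on U (\<lambda>x. X x a)"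
    and Gam_smooth: "smooth_on U Gam"
    and Gam_pos: "\<forall>x\<in>U. Gam x > 0"
    and K_def: "\<forall>x a. K x a = Gam x * X x a + grad Gam x a"
    and ricci_eq: "\<forall>x\<in>U. \<forall>a b. ricci g x a b
                     = (1/2) * X x a * X x b - sym_cov_d g X x a b + lam * g x a b"
  shows "\<forall>x\<in>U.
    (\<Sum>a\<in>UNIV. \<Sum>b\<in>UNIV. \<Sum>c\<in>UNIV. \<Sum>d\<in>UNIV. sym_cov_d g K x a b * ginv g x a c * ginv g x b d * cov_d g K x c d)
    = divg g (\<lambda>y a. (\<Sum>b\<in>UNIV. raise g K y b * sym_cov_d g K y a b)
                    - (1/2) * K y a * laplacian g Gam y
                    - (1/2) * K y a * divg g K y
                    - lam * Gam y * K y a) x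
      + divg g K x *
        ( - (\<Sum>a\<in>UNIV. \<Sum>b\<in>UNIV. ginv g x a b * K x a * K x b) / (2 * Gam x)
          + (1/2) * laplacian g Gam x
          + (1/2) * divg g K x
          + (1 / (2 * Gam x)) * (\<Sum>c\<in>UNIV. raise g K x c * grad Gam x c)
          + lam * Gam x)"
proof -
  interpret near_horizon U g X Gam lam K
    by unfold_locales (fact assms)+
  show ?thesis using divergence_identity by blast
qed

end
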